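(* Let $H_0\subset\mathbb D_{\mathcal R}(W)$ be the subalgebra generated by $T_1,\dots,T_n$, and let $\mathbb D_{\mathcal R}(W)^{H_0}=\{D\in\mathbb D_{\mathcal R}(W)\mid [D,h]=0\ \forall h\in H_0\}$. Then the map $\beta$ restricts to an algebra homomorphism $$\beta:\mathbb D_{\mathcal R}(W)^{H_0}\to\mathbb D_{\mathcal R}(L')^{W_0}.$$ In particular, for every $D\in\mathbb D_{\mathcal R}(W)^{H_0}$ the operator $\beta(D)$ preserves the subalgebra of $W_0$-invariant elements of $\mathcal Q$.
   Context: Fix $0<q<1$. Let $(V,\langle\cdot,\cdot\rangle)$ be a finite-dimensional Euclidean space. Let $\widehat V\simeq V\oplus\mathbb Rc$ be the space of real affine linear functions on $V$ ($v+sc$ is $u\mapsto\langle v,u\rangle+s$), $D(v+sc)=v$ the gradient, $\langle f,g\rangle:=\langle Df,Dg\rangle$, $f^\vee=2f/\langle f,f\rangle$. For a root system $R$, $R^\vee$ is the coroot system and $Q(\cdot),P(\cdot)$ denote root and weight lattices. One is in one of three cases: (a) $R\subset V$ is a finite reduced irreducible crystallographic root system whose long roots have squared length $2$, $L=P(R)$, $L'=P(R^\vee)$, $S=\{\alpha+rc\mid\alpha\in R,r\in\mathbb Z\}$; (b) $R$ as in (a), $L=L'=P(R^\vee)$, $S=\{(\alpha+rc)^\vee\mid \alpha\in R,r\in\mathbb Z\}$; (c) $V=\mathbb R^n$ with orthonormal basis $\epsilon_i$, $R=\{\pm\epsilon_i\pm\epsilon_j\ (i<j),\pm2\epsilon_m\}$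 (type $C_n$), $L=L'=Q(R^\vee)$, $S=\mathcal O_1\cup\dots\cup\mathcal O_5$ with $\mathcal O_1=\{\pm\epsilon_m+rc\}$, $\mathcal O_2=2\mathcal O_1$, $\mathcal O_3=\mathcal O_1+c/2$, $\mathcal O_4=2\mathcal O_3$, $\mathcal O_5=\{\pm\epsilon_i\pm\epsilon_j+rc\}$ ($r\in\mathbb Z$). $W_0$ is the Weyl group of $R$, $W=W_0\ltimes L'$ acting on $V$ ($t(\lambda')$ is translation by $\lambda'$) and on $\widehat V$ by transposition. Fix a basis $\alpha_1,\dots,\alpha_n$ of $R$, positive roots $R^+$, highest root $\varphi$. Put $a_i=\alpha_i$ ($1\le i\le n$) in case (a) and $a_i=\alpha_i^\vee$ in cases (b),(c); $a_0=-\varphi+c,\ -\varphi^\vee+c,\ -\varphi^\vee+c/2$ in cases (a),(b),(c). Let $S_1\subset S$ be the indivisible affine roots ($S_1=S$ in (a),(b), $S_1=\mathcal O_1\cup\mathcal O_3\cup\mathcal O_5$ in (c)), $\Delta=\{a_1,\dots,a_n\}$, $R'^\vee=D(S_1)$. $S_1^\pm$ are the positive/negative affine roots w.r.t. $a_0,\dots,a_n$, $s_i$ the reflection in $a_i$, $l(w)=\#(S_1^+\cap w^{-1}S_1^-)$, $\Omega=\{w\in W\mid l(w)=0\}$; every $w\in W$ has reduced expressions $w=\omega s_{i_1}\cdots s_{i_{l(w)}}$, $\omega\in\Omega$. $A=\mathbb C[L]$ has basis $z^\lambda$, viewed as the function $v\mapsto q^{\langle\lambda,v\rangle}$ on $V_{\mathbb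 C}$; $z^{\lambda+rc}:=q^rz^\lambda$. $W$ acts on $A$ and on its quotient field $\mathcal Q$ by $(vt(\lambda'))(z^\mu)=q^{-\langle\lambda',\mu\rangle}z^{v\mu}$ ($v\in W_0$). $\mathcal R\subset\mathcal Q$ is the subalgebra generated by $(1-rz^\alpha)^{-1}$, $\alpha\in R'^\vee$, $r\in\mathbb C$. $\mathbb D_{\mathcal R}(W)=\mathcal R\#W$ and $\mathbb D_{\mathcal R}(L')=\mathcal R\#t(L')$ are smash-product algebras ($(f_1w_1)(f_2w_2)=f_1w_1(f_2)\,w_1w_2$), acting on $\mathcal Q$ by $(fw)(g)=f\,w(g)$. Every $D\in\mathbb D_{\mathcal R}(W)$ is uniquely $D=\sum_{w\in W_0}D_ww$ with $D_w\in\mathbb D_{\mathcal R}(L')$, and $\beta(D):=\sum_{w\in W_0}D_w$. $\mathbb D_{\mathcal R}(L')^{W_0}=\{D\in\mathbb D_{\mathcal R}(L')\mid wDw^{-1}=D\ \forall w\in W_0\}$. Multiplicity label: $\underline k:S\to\mathbb C$ $W$-invariant. Cases (a),(b): $\tau_a=\tau'_a=q^{k_a/2}$ ($a\in S_1$). Case (c), with $\kappa_j=\underline k|_{\mathcal O_j}$: $(\tau_a,\tau'_a)=(q^{(\kappa_1+\kappa_2)/2},q^{(\kappa_1-\kappa_2)/2})$ on $\mathcal O_1$, $(q^{(\kappa_3+\kappa_4)/2},q^{(\kappa_3-\kappa_4)/2})$ on $\mathcal O_3$, $(q^{\kappa_5/2},q^{\kappa_5/2})$ on $\mathcal O_5$.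 Set $c_a(z)=\frac{(1-\tau_a\tau'_az^a)(1+\tau_a\tau_a'^{-1}z^a)}{\tau_a(1-z^{2a})}\in\mathcal R$, $\tau_i=\tau_{a_i}$ and $T_i=\tau_i+c_{a_i}(z)(s_i-1)\in\mathbb D_{\mathcal R}(W)$, $0\le i\le n$. *)

theory Defs
  imports "HOL-Analysis.Analysis" "HOL-Library.Poly_Mapping"
          "HOL-Computational_Algebra.Fraction_Field"
begin

definition reflection :: "'v::euclidean_space \<Rightarrow> 'v \<Rightarrow> 'v" where
  "reflection a x = x - (2 * (x \<bullet> a) / (a \<bullet> a)) *\<^sub>R a"

definition coroot :: "'v::euclidean_space \<Rightarrow> 'v" where
  "coroot a = (2 / (a \<bullet> a)) *\<^sub>R a"

definition root_system :: "'v::euclidean_space set \<Rightarrow> bool" where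
  "root_system R \<longleftrightarrow> finite R \<and> 0 \<notin> R \<and> span R = UNIV
     \<and> (\<forall>a\<in>R. reflection a ` R = R)
     \<and> (\<forall>a\<in>R. \<forall>b\<in>R. b \<bullet> coroot a \<in> \<int>)"

definition reduced :: "'v::euclidean_space set \<Rightarrow> bool" where
  "reduced R \<longleftrightarrow> (\<forall>a\<in>R. \<forall>c::real. c *\<^sub>R a \<in> R \<longrightarrow> c = 1 \<or> c = -1)"

definition irreducible_rs :: "'v::euclidean_space set \<Rightarrow> bool" where
  "irreducible_rs R \<longleftrightarrow> \<not> (\<exists>R1 R2. R1 \<noteq> {} \<and> R2 \<noteq> {} \<and> R1 \<union> R2 = R
       \<and> (\<forall>a\<in>R1. \<forall>b\<in>R2. a \<bullet> b = 0))"

definition root_basis :: "'v::euclidean_space set \<Rightarrow> (nat \<Rightarrow> 'v) \<Rightarrow> bool" where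
  "root_basis R al \<longleftrightarrow> (\<forall>i\<in>{1..DIM('v)}. al i \<in> R) \<and> inj_on al {1..DIM('v)}
     \<and> independent (al ` {1..DIM('v)})
     \<and> (\<forall>b\<in>R. \<exists>c::nat \<Rightarrow> int. b = (\<Sum>i=1..DIM('v). of_int (c i) *\<^sub>R al i)
            \<and> ((\<forall>i. c i \<ge> 0) \<or> (\<forall>i. c i \<le> 0)))"

definition weight_lattice :: "'v::euclidean_space set \<Rightarrow> 'v set" where
  "weight_lattice X = {l. \<forall>a\<in>X. l \<bullet> coroot a \<in> \<int>}"

definition root_lattice :: "'v::euclidean_space set \<Rightarrow> 'v set" where
  "root_lattice X = {(\<Sum>a\<in>X. of_int (c a) *\<^sub>R a) | c :: 'v \<Rightarrow> int. True}"

definition weyl_group :: "'v::euclidean_space set \<Rightarrow> ('v \<Rightarrow> 'v) set" where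
  "weyl_group R = {foldr (\<lambda>a f. reflection a \<circ> f) as id | as. set as \<subseteq> R}"

text \<open>W = W_0 \<ltimes> L', the element v t(l') acting by x \<mapsto> v (x + l')\<close>
definition affine_weyl :: "'v::euclidean_space set \<Rightarrow> 'v set \<Rightarrow> ('v \<Rightarrow> 'v) set" where
  "affine_weyl R L' = {(\<lambda>x. v (x + l)) | v l. v \<in> weyl_group R \<and> l \<in> L'}"

datatype setting_case = CaseA | CaseB | CaseC

definition typeC :: "'v::euclidean_space set \<Rightarrow> (nat \<Rightarrow> 'v) \<Rightarrow> bool" where
  "typeC R eps \<longleftrightarrow>
     (\<forall>i\<in>{1..DIM('v)}. \<forall>j\<in>{1..DIM('v)}. eps i \<bullet> eps j = (if i = j then 1 else 0))
   \<and> R = {s *\<^sub>R eps i + t *\<^sub>R eps j | s t i j. s \<in> {1,-1} \<and> t \<in> {1,-1} \<and> 1 \<le> i \<and> i < j \<and> j \<le> DIM('v)}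
       \<union> {(2 * s) *\<^sub>R eps m | s m. s \<in> {1,-1} \<and> m \<in> {1..DIM('v)}}"

definition setting :: "setting_case \<Rightarrow> 'v::euclidean_space set \<Rightarrow> (nat \<Rightarrow> 'v) \<Rightarrow> bool" where
  "setting cs R eps \<longleftrightarrow>
     (cs \<noteq> CaseC \<longrightarrow> root_system R \<and> reduced R \<and> irreducible_rs R
                       \<and> Max ((\<lambda>a. a \<bullet> a) ` R) = 2)
   \<and> (cs = CaseC \<longrightarrow> typeC R eps)"

definition latL :: "setting_case \<Rightarrow> 'v::euclidean_space set \<Rightarrow> 'v set" where
  "latL cs R = (case cs of CaseA \<Rightarrow> weight_lattice R
                         | CaseB \<Rightarrow> weight_lattice (coroot ` R)
                         | CaseC \<Rightarrow> root_lattice (coroot ` R))"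

definition latL' :: "setting_case \<Rightarrow> 'v::euclidean_space set \<Rightarrow> 'v set" where
  "latL' cs R = (case cs of CaseA \<Rightarrow> weight_lattice (coroot ` R)
                          | CaseB \<Rightarrow> weight_lattice (coroot ` R)
                          | CaseC \<Rightarrow> root_lattice (coroot ` R))"

definition Wgrp :: "setting_case \<Rightarrow> 'v::euclidean_space set \<Rightarrow> ('v \<Rightarrow> 'v) set" where
  "Wgrp cs R = affine_weyl R (latL' cs R)"

text \<open>affine functions v + s c, represented as pairs (v, s)\<close>
definition affval :: "'v::euclidean_space \<times> real \<Rightarrow> 'v \<Rightarrow> real" where
  "affval a u = fst a \<bullet> u + snd a"

definition orbC1 :: "(nat \<Rightarrow> 'v::euclidean_space) \<Rightarrow> ('v \<times> real) set" where
  "orbC1 eps = {(s *\<^sub>R eps m, of_int r) | s m r. s \<in> {1,-1} \<and> m \<in> {1..DIM('v)}}"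
definition orbC2 :: "(nat \<Rightarrow> 'v::euclidean_space) \<Rightarrow> ('v \<times> real) set" where
  "orbC2 eps = (\<lambda>(v,s). (2 *\<^sub>R v, 2 * s)) ` orbC1 eps"
definition orbC3 :: "(nat \<Rightarrow> 'v::euclidean_space) \<Rightarrow> ('v \<times> real) set" where
  "orbC3 eps = (\<lambda>(v,s). (v, s + 1/2)) ` orbC1 eps"
definition orbC4 :: "(nat \<Rightarrow> 'v::euclidean_space) \<Rightarrow> ('v \<times> real) set" where
  "orbC4 eps = (\<lambda>(v,s). (2 *\<^sub>R v, 2 * s)) ` orbC3 eps"
definition orbC5 :: "(nat \<Rightarrow> 'v::euclidean_space) \<Rightarrow> ('v \<times> real) set" where
  "orbC5 eps = {(s *\<^sub>R eps i + t *\<^sub>R eps j, of_int r) | s t i j r.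
                  s \<in> {1,-1} \<and> t \<in> {1,-1} \<and> 1 \<le> i \<and> i < j \<and> j \<le> DIM('v)}"

definition affroots :: "setting_case \<Rightarrow> 'v::euclidean_space set \<Rightarrow> (nat \<Rightarrow> 'v) \<Rightarrow> ('v \<times> real) set" where
  "affroots cs R eps = (case cs of
      CaseA \<Rightarrow> {(a, of_int r) | a r. a \<in> R}
    | CaseB \<Rightarrow> {(coroot a, 2 * of_int r / (a \<bullet> a)) | a r. a \<in> R}
    | CaseC \<Rightarrow> orbC1 eps \<union> orbC2 eps \<union> orbC3 eps \<union> orbC4 eps \<union> orbC5 eps)"

definition gradroots :: "setting_case \<Rightarrow> 'v::euclidean_space set \<Rightarrow> 'v set" where
  "gradroots cs R = (if cs = CaseA then R else coroot ` R)"

definition mult_label :: "setting_case \<Rightarrow> 'v::euclidean_space set \<Rightarrow> (nat \<Rightarrow> 'v)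
     \<Rightarrow> ('v \<times> real \<Rightarrow> complex) \<Rightarrow> bool" where
  "mult_label cs R eps k \<longleftrightarrow>
     (\<forall>g\<in>Wgrp cs R. \<forall>a\<in>affroots cs R eps. \<forall>b\<in>affroots cs R eps.
        (\<forall>u. affval b u = affval a (g u)) \<longrightarrow> k b = k a)"

definition simple_aff :: "setting_case \<Rightarrow> (nat \<Rightarrow> 'v::euclidean_space) \<Rightarrow> nat \<Rightarrow> 'v \<times> real" where
  "simple_aff cs al i = (if cs = CaseA then (al i, 0) else (coroot (al i), 0))"

definition qpow :: "real \<Rightarrow> complex \<Rightarrow> complex" where
  "qpow q x = exp (x * complex_of_real (ln q))"

definition tau :: "setting_case \<Rightarrow> (nat \<Rightarrow> 'v::euclidean_space) \<Rightarrow> real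
     \<Rightarrow> ('v \<times> real \<Rightarrow> complex) \<Rightarrow> 'v \<times> real \<Rightarrow> complex" where
  "tau cs eps q k a =
     (if cs = CaseC \<and> a \<in> orbC1 eps \<union> orbC3 eps
      then qpow q ((k a + k (2 *\<^sub>R fst a, 2 * snd a)) / 2)
      else qpow q (k a / 2))"

definition tau' :: "setting_case \<Rightarrow> (nat \<Rightarrow> 'v::euclidean_space) \<Rightarrow> real
     \<Rightarrow> ('v \<times> real \<Rightarrow> complex) \<Rightarrow> 'v \<times> real \<Rightarrow> complex" where
  "tau' cs eps q k a =
     (if cs = CaseC \<and> a \<in> orbC1 eps \<union> orbC3 eps
      then qpow q ((k a - k (2 *\<^sub>R fst a, 2 * snd a)) / 2)
      else qpow q (k a / 2))"

text \<open>Exponents: V is embedded additively and injectively into the totally ordered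
  group nat =>0 real (coordinates w.r.t. an enumeration of Basis), so that the
  monoid algebra is an integral domain (library instance) and has a fraction field.\<close>

type_synonym expo = "nat \<Rightarrow>\<^sub>0 real"
type_synonym galg = "expo \<Rightarrow>\<^sub>0 complex"
type_synonym qfield = "galg fract"

definition basis_enum :: "nat \<Rightarrow> 'v::euclidean_space" where
  "basis_enum = (SOME f. bij_betw f {..<DIM('v)} Basis)"

definition emb :: "'v::euclidean_space \<Rightarrow> expo" where
  "emb v = Abs_poly_mapping (\<lambda>i. if i < DIM('v) then v \<bullet> basis_enum i else 0)"

definition cQ :: "complex \<Rightarrow> qfield" where
  "cQ c = Fract (Poly_Mapping.single 0 c) 1"

definition zmon :: "'v::euclidean_space \<Rightarrow> qfield" where
  "zmon v = Fract (Poly_Mapping.single (emb v) 1) 1"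

definition zaff :: "real \<Rightarrow> 'v::euclidean_space \<times> real \<Rightarrow> qfield" where
  "zaff q a = cQ (complex_of_real (q powr snd a)) * zmon (fst a)"

definition galgL :: "'v::euclidean_space set \<Rightarrow> galg set" where
  "galgL L = {a. Poly_Mapping.keys a \<subseteq> emb ` L}"

definition QL :: "'v::euclidean_space set \<Rightarrow> qfield set" where
  "QL L = {Fract a b | a b. a \<in> galgL L \<and> b \<in> galgL L \<and> b \<noteq> 0}"

text \<open>action of g = v t(l') (g x = v (x + l')) on A: z^\<mu> \<mapsto> q^(-<l',\<mu>>) z^(v \<mu>);
  note <l', \<mu>> = <g 0, v \<mu>> and v \<mu> = g \<mu> - g 0\<close>
definition actA :: "real \<Rightarrow> ('v::euclidean_space \<Rightarrow> 'v) \<Rightarrow> galg \<Rightarrow> galg" where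
  "actA q g a = (\<Sum>m\<in>Poly_Mapping.keys a.
      (let mu = inv (emb :: 'v \<Rightarrow> expo) m; w = g mu - g 0 in
        Poly_Mapping.single (emb w)
          (Poly_Mapping.lookup a m * complex_of_real (q powr (- (g 0 \<bullet> w))))))"

text \<open>action on Q (the quotient field of A = C[V], which contains C[L] for every L)\<close>
definition actQ :: "real \<Rightarrow> ('v::euclidean_space \<Rightarrow> 'v) \<Rightarrow> qfield \<Rightarrow> qfield" where
  "actQ q g x = (THE y. \<forall>a b. a \<in> galgL (UNIV :: 'v set) \<and> b \<in> galgL (UNIV :: 'v set)
       \<and> b \<noteq> 0 \<and> x = Fract a b \<longrightarrow> y = Fract (actA q g a) (actA q g b))"

inductive_set Ralg :: "'v::euclidean_space set \<Rightarrow> qfield set" for X :: "'v set" where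
  const: "cQ c \<in> Ralg X"
| gen: "a \<in> X \<Longrightarrow> inverse (1 - cQ r * zmon a) \<in> Ralg X"
| add: "x \<in> Ralg X \<Longrightarrow> y \<in> Ralg X \<Longrightarrow> x + y \<in> Ralg X"
| mult: "x \<in> Ralg X \<Longrightarrow> y \<in> Ralg X \<Longrightarrow> x * y \<in> Ralg X"

text \<open>elements of the smash product: finitely supported maps W \<Rightarrow> Q, D = \<Sum> D(g) g\<close>
type_synonym 'v dop = "('v \<Rightarrow> 'v) \<Rightarrow> qfield"

definition dsupp :: "'v dop \<Rightarrow> ('v \<Rightarrow> 'v) set" where
  "dsupp D = {g. D g \<noteq> 0}"

definition dadd :: "'v dop \<Rightarrow> 'v dop \<Rightarrow> 'v dop" where
  "dadd D E = (\<lambda>g. D g + E g)"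

definition dscal :: "complex \<Rightarrow> 'v dop \<Rightarrow> 'v dop" where
  "dscal c D = (\<lambda>g. cQ c * D g)"

text \<open>(f1 w1)(f2 w2) = f1 w1(f2) w1 w2\<close>
definition dmult :: "real \<Rightarrow> 'v::euclidean_space dop \<Rightarrow> 'v dop \<Rightarrow> 'v dop" where
  "dmult q D E = (\<lambda>g. \<Sum>p\<in>{(g1, g2). g1 \<in> dsupp D \<and> g2 \<in> dsupp E \<and> g1 \<circ> g2 = g}.
                        D (fst p) * actQ q (fst p) (E (snd p)))"

definition dterm :: "qfield \<Rightarrow> ('v \<Rightarrow> 'v) \<Rightarrow> 'v dop" where
  "dterm f w = (\<lambda>g. if g = w then f else 0)"

definition dunit :: "'v dop" where
  "dunit = dterm 1 id"

definition DRW :: "setting_case \<Rightarrow> 'v::euclidean_space set \<Rightarrow> 'v dop set" where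
  "DRW cs R = {D. finite (dsupp D) \<and> dsupp D \<subseteq> Wgrp cs R
                 \<and> (\<forall>g. D g \<in> Ralg (gradroots cs R))}"

definition DRL :: "setting_case \<Rightarrow> 'v::euclidean_space set \<Rightarrow> 'v dop set" where
  "DRL cs R = {D \<in> DRW cs R. \<forall>g\<in>dsupp D. \<forall>x. g x = x + g 0}"

definition DRL_inv :: "real \<Rightarrow> setting_case \<Rightarrow> 'v::euclidean_space set \<Rightarrow> 'v dop set" where
  "DRL_inv q cs R = {D \<in> DRL cs R. \<forall>w\<in>weyl_group R.
       dmult q (dmult q (dterm 1 w) D) (dterm 1 (inv w)) = D}"

text \<open>beta(\<Sum>_{w \<in> W_0} D_w w) = \<Sum>_w D_w; the element t(l') w is the map x \<mapsto> w x + l'\<close>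
definition dbeta :: "'v::euclidean_space dop \<Rightarrow> 'v dop" where
  "dbeta D = (\<lambda>h. if (\<forall>x. h x = x + h 0)
                   then (\<Sum>g\<in>{g\<in>dsupp D. g 0 = h 0}. D g) else 0)"

definition dapply :: "real \<Rightarrow> 'v::euclidean_space dop \<Rightarrow> qfield \<Rightarrow> qfield" where
  "dapply q D f = (\<Sum>g\<in>dsupp D. D g * actQ q g f)"

definition c_fun :: "real \<Rightarrow> complex \<Rightarrow> complex \<Rightarrow> 'v::euclidean_space \<times> real \<Rightarrow> qfield" where
  "c_fun q t t' a = (1 - cQ (t * t') * zaff q a) * (1 + cQ (t / t') * zaff q a)
                    / (cQ t * (1 - (zaff q a)^2))"

definition Top :: "real \<Rightarrow> setting_case \<Rightarrow> (nat \<Rightarrow> 'v::euclidean_space) \<Rightarrow> (nat \<Rightarrow> 'v)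
     \<Rightarrow> ('v \<times> real \<Rightarrow> complex) \<Rightarrow> nat \<Rightarrow> 'v dop" where
  "Top q cs eps al k i =
     (let a = simple_aff cs al i; t = tau cs eps q k a; t' = tau' cs eps q k a;
          c = c_fun q t t' a in
      dadd (dscal t dunit)
        (dmult q (dterm c id) (dadd (dterm 1 (reflection (fst a))) (dterm (-1) id))))"

inductive_set H0 :: "real \<Rightarrow> setting_case \<Rightarrow> (nat \<Rightarrow> 'v::euclidean_space) \<Rightarrow> (nat \<Rightarrow> 'v)
     \<Rightarrow> ('v \<times> real \<Rightarrow> complex) \<Rightarrow> 'v dop set"
  for q cs eps al k where
  scal: "dscal c dunit \<in> H0 q cs eps al k"
| gen: "i \<in> {1..DIM('v)} \<Longrightarrow> Top q cs eps al k i \<in> H0 q cs eps al k"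
| add: "D \<in> H0 q cs eps al k \<Longrightarrow> E \<in> H0 q cs eps al k \<Longrightarrow> dadd D E \<in> H0 q cs eps al k"
| mult: "D \<in> H0 q cs eps al k \<Longrightarrow> E \<in> H0 q cs eps al k \<Longrightarrow> dmult q D E \<in> H0 q cs eps al k"

definition commutant :: "real \<Rightarrow> setting_case \<Rightarrow> 'v::euclidean_space set \<Rightarrow> (nat \<Rightarrow> 'v)
     \<Rightarrow> (nat \<Rightarrow> 'v) \<Rightarrow> ('v \<times> real \<Rightarrow> complex) \<Rightarrow> 'v dop set" where
  "commutant q cs R eps al k =
     {D \<in> DRW cs R. \<forall>h\<in>H0 q cs eps al k. dmult q D h = dmult q h D}"

end

theory Submission
  imports Defs
begin

text \<open>
  An operator D in the commutant of H_0 preserves the field K of W_0-invariants of Q: since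
  T_i f - \<tau>_i f = c(a_i) (s_i f - f) with c(a_i) \<noteq> 0, the s_i-invariants are exactly the
  \<tau>_i-eigenvectors of T_i, which D preserves as it commutes with T_i, and the simple reflections
  generate W_0. Writing D = \<Sum>_w D_w w, the operators D and \<beta>(D) agree on K.
  Operators supported on translations act faithfully on K: on the powers of the invariant
  y = \<Sum>_(a \<in> R) z^a they give a Vandermonde system in the pairwise distinct values t(\<lambda>) y.
  So identities between images under \<beta> can be checked on K, where \<beta>(D E) and \<beta>(D) \<beta>(E)
  both act as D E, and w \<beta>(D) w^-1 acts as \<beta>(D).
\<close>

section \<open>Affine isometries\<close>

definition aff_isometry :: "('v::euclidean_space \<Rightarrow> 'v) \<Rightarrow> bool" where
  "aff_isometry g \<longleftrightarrow> linear (\<lambda>x. g x - g 0) \<and> (\<forall>x y. (g x - g 0) \<bullet> (g y - g 0) = x \<bullet> y)"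

lemma aff_isometry_linear: "aff_isometry g \<Longrightarrow> linear (\<lambda>x. g x - g 0)"
  by (simp add: aff_isometry_def)

lemma aff_isometry_inner: "aff_isometry g \<Longrightarrow> (g x - g 0) \<bullet> (g y - g 0) = x \<bullet> y"
  by (simp add: aff_isometry_def)

lemma aff_isometry_add: "aff_isometry g \<Longrightarrow> g (x + y) - g 0 = (g x - g 0) + (g y - g 0)"
  using linear_add[OF aff_isometry_linear] by blast

lemma aff_isometry_diff: "aff_isometry g \<Longrightarrow> g (x - y) - g 0 = (g x - g 0) - (g y - g 0)"
  using linear_diff[OF aff_isometry_linear] by blast

lemma aff_isometry_diff': "aff_isometry g \<Longrightarrow> g x - g y = g (x - y) - g 0"
  by (simp add: aff_isometry_diff)

lemma aff_isometry_inj: "aff_isometry g \<Longrightarrow> g x - g 0 = g y - g 0 \<Longrightarrow> x = y"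
proof -
  assume g: "aff_isometry g" and h: "g x - g 0 = g y - g 0"
  have "g (x - y) - g 0 = 0" using h by (simp add: aff_isometry_diff[OF g])
  then have "(x - y) \<bullet> (x - y) = 0" using aff_isometry_inner[OF g, of "x - y" "x - y"] by simp
  then show "x = y" by simp
qed

lemma aff_isometry_comp: "aff_isometry g1 \<Longrightarrow> aff_isometry g2 \<Longrightarrow> aff_isometry (g1 \<circ> g2)"
proof -
  assume g1: "aff_isometry g1" and g2: "aff_isometry g2"
  have e: "(g1 \<circ> g2) x - (g1 \<circ> g2) 0 = g1 (g2 x - g2 0) - g1 0" for x
    unfolding o_def by (rule aff_isometry_diff'[OF g1])
  show ?thesis unfolding aff_isometry_def e
  proof
    have "linear ((\<lambda>x. g1 x - g1 0) \<circ> (\<lambda>x. g2 x - g2 0))"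
      by (rule linear_compose[OF aff_isometry_linear[OF g2] aff_isometry_linear[OF g1]])
    then show "linear (\<lambda>x. g1 (g2 x - g2 0) - g1 0)" by (simp add: o_def)
    show "\<forall>x y. (g1 (g2 x - g2 0) - g1 0) \<bullet> (g1 (g2 y - g2 0) - g1 0) = x \<bullet> y"
      by (simp add: aff_isometry_inner[OF g1] aff_isometry_inner[OF g2])
  qed
qed

lemma aff_isometry_id: "aff_isometry id"
  by (simp add: aff_isometry_def linear_id[unfolded id_def])

lemma aff_isometry_translation: "aff_isometry (\<lambda>x. x + c)"
  by (simp add: aff_isometry_def linear_id[unfolded id_def])

section \<open>The action on the group algebra\<close>

lemma basis_enum_bij: "bij_betw (basis_enum :: nat \<Rightarrow> 'v::euclidean_space) {..<DIM('v)} Basis"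
proof -
  have "\<exists>f. bij_betw (f :: nat \<Rightarrow> 'v) {..<DIM('v)} Basis"
    using ex_bij_betw_nat_finite[OF finite_Basis] by (simp add: atLeast0LessThan)
  then show ?thesis unfolding basis_enum_def by (rule someI_ex)
qed

lemma lookup_emb: "Poly_Mapping.lookup (emb (v::'v::euclidean_space)) i = (if i < DIM('v) then v \<bullet> basis_enum i else 0)"
proof -
  have "finite {i. (if i < DIM('v) then v \<bullet> basis_enum i else 0) \<noteq> 0}"
    by (rule finite_subset[of _ "{..<DIM('v)}"]) auto
  then show ?thesis unfolding emb_def by (simp only: lookup_Abs_poly_mapping)
qed

lemma emb_add: "emb (x + y) = emb x + emb (y::'v::euclidean_space)"
  by (rule poly_mapping_eqI) (simp add: lookup_emb lookup_add inner_add_left)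

lemma emb_zero: "emb (0::'v::euclidean_space) = 0"
  by (rule poly_mapping_eqI) (simp add: lookup_emb)

lemma emb_inj: "inj (emb :: 'v::euclidean_space \<Rightarrow> expo)"
proof (rule injI)
  fix x y :: 'v assume h: "emb x = emb y"
  show "x = y"
  proof (rule euclidean_eqI)
    fix b :: 'v assume b: "b \<in> Basis"
    from basis_enum_bij[where 'v='v] b obtain i where i: "i < DIM('v)" "basis_enum i = b"
      unfolding bij_betw_def by force
    have "Poly_Mapping.lookup (emb x) i = Poly_Mapping.lookup (emb y) i" using h by simp
    then show "x \<bullet> b = y \<bullet> b" using i by (simp add: lookup_emb)
  qed
qed

lemma emb_eq_iff[simp]: "emb x = emb y \<longleftrightarrow> x = (y::'v::euclidean_space)"
  using emb_inj by (auto dest: injD)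

lemma emb_eq_0_iff[simp]: "emb x = 0 \<longleftrightarrow> x = (0::'v::euclidean_space)"
  using emb_eq_iff[of x 0] by (simp add: emb_zero)

lemma inv_emb[simp]: "inv emb (emb x) = (x::'v::euclidean_space)"
  by (rule inv_f_f[OF emb_inj])

text \<open>Exponents outside \<open>range emb\<close> carry no meaning: \<open>actA\<close> sends them to \<open>emb\<close> of junk
  values. Hence the actions are only studied on \<open>galgL UNIV\<close> and its fraction field \<open>QL UNIV\<close>.\<close>

lemma mem_galgL_UNIV: "a \<in> galgL (UNIV :: 'v::euclidean_space set) \<longleftrightarrow> Poly_Mapping.keys a \<subseteq> range (emb :: 'v \<Rightarrow> expo)"
  by (simp add: galgL_def)

lemma galg_expand: "a = (\<Sum>m\<in>Poly_Mapping.keys a. Poly_Mapping.single m (Poly_Mapping.lookup a m))"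
proof (rule poly_mapping_eqI)
  fix k
  show "Poly_Mapping.lookup a k = Poly_Mapping.lookup (\<Sum>m\<in>Poly_Mapping.keys a. Poly_Mapping.single m (Poly_Mapping.lookup a m)) k"
    by (simp add: lookup_sum lookup_single when_def in_keys_iff)
qed

lemma galgL_add: "a \<in> galgL (UNIV::'v::euclidean_space set) \<Longrightarrow> b \<in> galgL (UNIV::'v set) \<Longrightarrow> a + b \<in> galgL (UNIV::'v set)"
  unfolding mem_galgL_UNIV using keys_add[of a b] by blast

lemma galgL_uminus: "a \<in> galgL (UNIV::'v::euclidean_space set) \<Longrightarrow> - a \<in> galgL (UNIV::'v set)"
  unfolding mem_galgL_UNIV by simp

lemma galgL_mult: "a \<in> galgL (UNIV::'v::euclidean_space set) \<Longrightarrow> b \<in> galgL (UNIV::'v set) \<Longrightarrow> a * b \<in> galgL (UNIV::'v set)"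
  unfolding mem_galgL_UNIV
proof -
  assume a: "Poly_Mapping.keys a \<subseteq> range (emb::'v \<Rightarrow> expo)" and b: "Poly_Mapping.keys b \<subseteq> range (emb::'v \<Rightarrow> expo)"
  show "Poly_Mapping.keys (a * b) \<subseteq> range (emb::'v \<Rightarrow> expo)"
  proof
    fix x assume "x \<in> Poly_Mapping.keys (a * b)"
    then obtain u v where "x = u + v" "u \<in> Poly_Mapping.keys a" "v \<in> Poly_Mapping.keys b"
      using keys_mult[of a b] by blast
    with a b obtain s t :: 'v where "u = emb s" "v = emb t" by blast
    then have "x = emb (s + t)" using \<open>x = u + v\<close> by (simp add: emb_add)
    then show "x \<in> range (emb::'v \<Rightarrow> expo)" by blast
  qed
qed

lemma galgL_single: "Poly_Mapping.single (emb (x::'v::euclidean_space)) c \<in> galgL (UNIV::'v set)"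
  unfolding mem_galgL_UNIV by auto

lemma galgL_zero: "0 \<in> galgL (UNIV::'v::euclidean_space set)"
  unfolding mem_galgL_UNIV by auto

lemma galgL_one: "1 \<in> galgL (UNIV::'v::euclidean_space set)"
  unfolding mem_galgL_UNIV using emb_zero[where 'v='v] by auto

lemma galgL_sum: "(\<And>i. i \<in> I \<Longrightarrow> f i \<in> galgL (UNIV::'v::euclidean_space set)) \<Longrightarrow> sum f I \<in> galgL (UNIV::'v set)"
  by (induction I rule: infinite_finite_induct) (auto simp: galgL_zero galgL_add)

definition act_key :: "('v::euclidean_space \<Rightarrow> 'v) \<Rightarrow> expo \<Rightarrow> expo" where
  "act_key g m = emb (g (inv (emb :: 'v \<Rightarrow> expo) m) - g 0)"

definition act_coeff :: "real \<Rightarrow> ('v::euclidean_space \<Rightarrow> 'v) \<Rightarrow> expo \<Rightarrow> complex" where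
  "act_coeff q g m = complex_of_real (q powr (- (g 0 \<bullet> (g (inv (emb :: 'v \<Rightarrow> expo) m) - g 0))))"

lemma actA_alt: "actA q g a = (\<Sum>m\<in>Poly_Mapping.keys a. Poly_Mapping.single (act_key g m) (Poly_Mapping.lookup a m * act_coeff q g m))"
  unfolding actA_def act_key_def act_coeff_def Let_def by simp

lemma actA_superset:
  assumes "finite S" "Poly_Mapping.keys a \<subseteq> S"
  shows "actA q g a = (\<Sum>m\<in>S. Poly_Mapping.single (act_key g m) (Poly_Mapping.lookup a m * act_coeff q g m))"
  unfolding actA_alt
  by (rule sum.mono_neutral_left[OF assms(1,2)]) (auto simp: in_keys_iff)

lemma actA_add: "actA q g (a + b) = actA q g a + actA q g b"
proof -
  let ?S = "Poly_Mapping.keys a \<union> Poly_Mapping.keys b"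
  have f: "finite ?S" by simp
  have "actA q g (a + b) = (\<Sum>m\<in>?S. Poly_Mapping.single (act_key g m) (Poly_Mapping.lookup (a+b) m * act_coeff q g m))"
    by (rule actA_superset[OF f keys_add])
  also have "\<dots> = (\<Sum>m\<in>?S. Poly_Mapping.single (act_key g m) (Poly_Mapping.lookup a m * act_coeff q g m))
      + (\<Sum>m\<in>?S. Poly_Mapping.single (act_key g m) (Poly_Mapping.lookup b m * act_coeff q g m))"
    by (simp add: lookup_add distrib_right single_add sum.distrib)
  also have "\<dots> = actA q g a + actA q g b"
    by (simp add: actA_superset[OF f])
  finally show ?thesis .
qed

lemma actA_zero[simp]: "actA q g 0 = 0"
  by (simp add: actA_alt)

lemma actA_sum: "actA q g (sum f S) = (\<Sum>x\<in>S. actA q g (f x))"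
  by (induction S rule: infinite_finite_induct) (auto simp: actA_add)

lemma actA_single: "actA q g (Poly_Mapping.single m c) = Poly_Mapping.single (act_key g m) (c * act_coeff q g m)"
  by (simp add: actA_alt)

lemma act_key_emb: "act_key g (emb x) = emb (g x - g 0)"
  by (simp add: act_key_def)

lemma act_coeff_emb: "act_coeff q g (emb x) = complex_of_real (q powr (- (g 0 \<bullet> (g x - g 0))))"
  by (simp add: act_coeff_def)

lemma actA_single_emb: "actA q g (Poly_Mapping.single (emb x) c)
   = Poly_Mapping.single (emb (g x - g 0)) (c * complex_of_real (q powr (- (g 0 \<bullet> (g x - g 0)))))"
  by (simp add: actA_single act_key_emb act_coeff_emb)

lemma galgL_actA: "actA q (g::'v::euclidean_space \<Rightarrow> 'v) a \<in> galgL (UNIV::'v set)"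
  unfolding actA_alt act_key_def by (rule galgL_sum) (rule galgL_single)

lemma powr_minus_diff: "(x::real) powr (- a - b) = x powr (-a) * x powr (-b)"
  using powr_add[of x "-a" "-b"] by simp

lemma powr_minus_add: "(x::real) powr (- (a + b)) = x powr (-a) * x powr (-b)"
  using powr_add[of x "-a" "-b"] by simp

lemma actA_one:
  assumes "0 < q"
  shows "actA q (g::'v::euclidean_space \<Rightarrow> 'v) 1 = 1"
proof -
  have "actA q g (Poly_Mapping.single (emb (0::'v)) 1) = Poly_Mapping.single (emb (0::'v)) 1"
    unfolding actA_single_emb using assms by simp
  then show ?thesis by (simp add: emb_zero)
qed

lemma actA_mult:
  fixes g :: "'v::euclidean_space \<Rightarrow> 'v"
  assumes g: "aff_isometry g" and a: "a \<in> galgL (UNIV::'v set)" and b: "b \<in> galgL (UNIV::'v set)"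
  shows "actA q g (a * b) = actA q g a * actA q g b"
proof -
  let ?Ka = "Poly_Mapping.keys a" and ?Kb = "Poly_Mapping.keys b"
  have key: "actA q g (Poly_Mapping.single (m + m') (c * d))
      = actA q g (Poly_Mapping.single m c) * actA q g (Poly_Mapping.single m' d)"
    if "m \<in> ?Ka" "m' \<in> ?Kb" for m m' c d
  proof -
    from that a b obtain s t :: 'v where st: "m = emb s" "m' = emb t"
      unfolding mem_galgL_UNIV by blast
    have e: "m + m' = emb (s + t)" by (simp add: st emb_add)
    show ?thesis
      unfolding e unfolding st actA_single_emb mult_single
      by (simp add: aff_isometry_add[OF g] emb_add inner_add_right powr_minus_add powr_minus_diff mult_ac)
  qed
  have "a * b = (\<Sum>m\<in>?Ka. Poly_Mapping.single m (Poly_Mapping.lookup a m)) * (\<Sum>m'\<in>?Kb. Poly_Mapping.single m' (Poly_Mapping.lookup b m'))"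
    using galg_expand[of a] galg_expand[of b] by simp
  also have "\<dots> = (\<Sum>m\<in>?Ka. \<Sum>m'\<in>?Kb. Poly_Mapping.single (m + m') (Poly_Mapping.lookup a m * Poly_Mapping.lookup b m'))"
    by (simp add: sum_product mult_single)
  finally have ab: "a * b = \<dots>" .
  have "actA q g (a * b) = (\<Sum>m\<in>?Ka. \<Sum>m'\<in>?Kb. actA q g (Poly_Mapping.single m (Poly_Mapping.lookup a m)) * actA q g (Poly_Mapping.single m' (Poly_Mapping.lookup b m')))"
    unfolding ab actA_sum using key by simp
  also have "\<dots> = actA q g a * actA q g b"
    apply (subst (3) galg_expand[of a])
    apply (subst (3) galg_expand[of b])
    by (simp add: actA_sum sum_product)
  finally show ?thesis .
qed

lemma actA_comp:
  fixes g1 g2 :: "'v::euclidean_space \<Rightarrow> 'v"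
  assumes g1: "aff_isometry g1" and g2: "aff_isometry g2" and a: "a \<in> galgL (UNIV::'v set)"
  shows "actA q (g1 \<circ> g2) a = actA q g1 (actA q g2 a)"
proof -
  have key: "actA q (g1 \<circ> g2) (Poly_Mapping.single m c) = actA q g1 (actA q g2 (Poly_Mapping.single m c))"
    if "m \<in> Poly_Mapping.keys a" for m c
  proof -
    from that a obtain s :: 'v where s: "m = emb s" unfolding mem_galgL_UNIV by blast
    have e1: "g1 (g2 s) - g1 (g2 0) = g1 (g2 s - g2 0) - g1 0"
      by (rule aff_isometry_diff'[OF g1])
    have e2: "g1 (g2 0) = (g1 (g2 0) - g1 0) + g1 0" by simp
    have e3: "g1 (g2 0) \<bullet> (g1 (g2 s - g2 0) - g1 0)
        = g2 0 \<bullet> (g2 s - g2 0) + g1 0 \<bullet> (g1 (g2 s - g2 0) - g1 0)"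
    proof -
      have "g1 (g2 0) \<bullet> (g1 (g2 s - g2 0) - g1 0)
          = (g1 (g2 0) - g1 0) \<bullet> (g1 (g2 s - g2 0) - g1 0) + g1 0 \<bullet> (g1 (g2 s - g2 0) - g1 0)"
        by (simp add: inner_diff_left)
      also have "(g1 (g2 0) - g1 0) \<bullet> (g1 (g2 s - g2 0) - g1 0) = g2 0 \<bullet> (g2 s - g2 0)"
        by (rule aff_isometry_inner[OF g1])
      finally show ?thesis .
    qed
    show ?thesis
      by (simp add: s actA_single_emb e1 e3 powr_minus_diff of_real_mult mult.assoc mult.commute)
  qed
  show ?thesis
    apply (subst (1 2) galg_expand[of a])
    by (simp add: actA_sum key)
qed

lemma actA_id: "0 < q \<Longrightarrow> a \<in> galgL (UNIV::'v::euclidean_space set) \<Longrightarrow> actA q (id::'v \<Rightarrow> 'v) a = a"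
proof -
  assume q: "0 < q" and a: "a \<in> galgL (UNIV::'v set)"
  have key: "actA q (id::'v\<Rightarrow>'v) (Poly_Mapping.single m c) = Poly_Mapping.single m c"
    if "m \<in> Poly_Mapping.keys a" for m c
  proof -
    from that a obtain s :: 'v where s: "m = emb s" unfolding mem_galgL_UNIV by blast
    show ?thesis using q by (simp add: s actA_single_emb)
  qed
  show ?thesis
    apply (subst (1 2) galg_expand[of a])
    by (simp add: actA_sum key)
qed

lemma lookup_actA_emb:
  fixes g :: "'v::euclidean_space \<Rightarrow> 'v"
  assumes g: "aff_isometry g" and a: "a \<in> galgL (UNIV::'v set)"
  shows "Poly_Mapping.lookup (actA q g a) (emb (g x - g 0)) = Poly_Mapping.lookup a (emb x) * act_coeff q g (emb x)"
proof -
  have "Poly_Mapping.lookup (actA q g a) (emb (g x - g 0))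
      = (\<Sum>m\<in>Poly_Mapping.keys a. (Poly_Mapping.lookup a m * act_coeff q g m when act_key g m = emb (g x - g 0)))"
    unfolding actA_alt by (simp add: lookup_sum lookup_single)
  also have "\<dots> = (\<Sum>m\<in>Poly_Mapping.keys a. (if m = emb x then Poly_Mapping.lookup a m * act_coeff q g m else 0))"
  proof (rule sum.cong[OF refl])
    fix m assume "m \<in> Poly_Mapping.keys a"
    with a obtain s :: 'v where s: "m = emb s" unfolding mem_galgL_UNIV by blast
    have "(g s - g 0 = g x - g 0) = (s = x)" using aff_isometry_inj[OF g] by blast
    then show "(Poly_Mapping.lookup a m * act_coeff q g m when act_key g m = emb (g x - g 0))
       = (if m = emb x then Poly_Mapping.lookup a m * act_coeff q g m else 0)"
      by (simp add: s act_key_emb when_def)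
  qed
  also have "\<dots> = Poly_Mapping.lookup a (emb x) * act_coeff q g (emb x)"
    by (simp add: sum.delta in_keys_iff)
  finally show ?thesis .
qed

lemma actA_eq_0:
  fixes g :: "'v::euclidean_space \<Rightarrow> 'v"
  assumes q: "0 < q" and g: "aff_isometry g" and a: "a \<in> galgL (UNIV::'v set)" and z: "actA q g a = 0"
  shows "a = 0"
proof (rule poly_mapping_eqI)
  fix m
  show "Poly_Mapping.lookup a m = Poly_Mapping.lookup 0 m"
  proof (cases "m \<in> Poly_Mapping.keys a")
    case True
    with a obtain s :: 'v where s: "m = emb s" unfolding mem_galgL_UNIV by blast
    have "Poly_Mapping.lookup a (emb s) * act_coeff q g (emb s) = 0"
      using lookup_actA_emb[OF g a, of q s] z by simp
    moreover have "act_coeff q g (emb s) \<noteq> 0" using q by (simp add: act_coeff_emb)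
    ultimately show ?thesis by (simp add: s)
  next
    case False then show ?thesis by (simp add: in_keys_iff)
  qed
qed

section \<open>The action on the fraction field\<close>

lemma QL_UNIV_iff: "x \<in> QL (UNIV :: 'v::euclidean_space set) \<longleftrightarrow>
   (\<exists>a b. a \<in> galgL (UNIV::'v set) \<and> b \<in> galgL (UNIV::'v set) \<and> b \<noteq> 0 \<and> x = Fract a b)"
  unfolding QL_def by blast

lemma QL_Fract: "a \<in> galgL (UNIV::'v::euclidean_space set) \<Longrightarrow> b \<in> galgL (UNIV::'v set) \<Longrightarrow> Fract a b \<in> QL (UNIV :: 'v set)"
proof (cases "b = 0")
  case True
  then have "Fract a b = Fract 0 1" by (simp add: eq_fract)
  then show ?thesis unfolding QL_UNIV_iff using galgL_zero galgL_one by fastforce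
next
  case False
  assume "a \<in> galgL (UNIV::'v::euclidean_space set)" "b \<in> galgL (UNIV::'v set)"
  then show ?thesis unfolding QL_UNIV_iff using False by blast
qed

lemma QL_UNIV_cases:
  assumes "x \<in> QL (UNIV :: 'v::euclidean_space set)"
  obtains a b where "a \<in> galgL (UNIV::'v set)" "b \<in> galgL (UNIV::'v set)" "b \<noteq> 0" "x = Fract a b"
  using assms unfolding QL_UNIV_iff by blast

lemma QL_zero: "0 \<in> QL (UNIV :: 'v::euclidean_space set)"
  using QL_Fract[OF galgL_zero galgL_one] by (simp add: fract_collapse)

lemma QL_one: "1 \<in> QL (UNIV :: 'v::euclidean_space set)"
  using QL_Fract[OF galgL_one galgL_one] by (simp add: fract_collapse)

lemma QL_add: "x \<in> QL (UNIV :: 'v::euclidean_space set) \<Longrightarrow> y \<in> QL (UNIV :: 'v set) \<Longrightarrow> x + y \<in> QL (UNIV :: 'v set)"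
  unfolding QL_UNIV_iff[of x] QL_UNIV_iff[of y]
  by (auto intro!: QL_Fract galgL_add galgL_mult)

lemma QL_mult: "x \<in> QL (UNIV :: 'v::euclidean_space set) \<Longrightarrow> y \<in> QL (UNIV :: 'v set) \<Longrightarrow> x * y \<in> QL (UNIV :: 'v set)"
  unfolding QL_UNIV_iff[of x] QL_UNIV_iff[of y]
  by (auto intro!: QL_Fract galgL_add galgL_mult)

lemma QL_uminus: "x \<in> QL (UNIV :: 'v::euclidean_space set) \<Longrightarrow> - x \<in> QL (UNIV :: 'v set)"
  unfolding QL_UNIV_iff[of x]
  by (auto intro!: QL_Fract galgL_uminus)

lemma QL_diff: "x \<in> QL (UNIV :: 'v::euclidean_space set) \<Longrightarrow> y \<in> QL (UNIV :: 'v set) \<Longrightarrow> x - y \<in> QL (UNIV :: 'v set)"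
  unfolding diff_conv_add_uminus by (intro QL_add QL_uminus)

lemma QL_inverse: "x \<in> QL (UNIV :: 'v::euclidean_space set) \<Longrightarrow> inverse x \<in> QL (UNIV :: 'v set)"
  unfolding QL_UNIV_iff[of x]
  by (auto intro!: QL_Fract)

lemma QL_divide: "x \<in> QL (UNIV :: 'v::euclidean_space set) \<Longrightarrow> y \<in> QL (UNIV :: 'v set) \<Longrightarrow> x / y \<in> QL (UNIV :: 'v set)"
  unfolding divide_inverse by (intro QL_mult QL_inverse)

lemma QL_sum: "(\<And>i. i \<in> I \<Longrightarrow> f i \<in> QL (UNIV :: 'v::euclidean_space set)) \<Longrightarrow> sum f I \<in> QL (UNIV :: 'v set)"
  by (induction I rule: infinite_finite_induct) (auto simp: QL_zero QL_add)

lemma QL_power: "x \<in> QL (UNIV :: 'v::euclidean_space set) \<Longrightarrow> x ^ n \<in> QL (UNIV :: 'v set)"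
  by (induction n) (auto simp: QL_one QL_mult)

lemma QL_minus_one: "(-1::qfield) \<in> QL (UNIV::'v::euclidean_space set)"
  using QL_uminus[OF QL_one] by simp

lemma QL_subset_UNIV: "QL (L::'v::euclidean_space set) \<subseteq> QL (UNIV::'v set)"
  unfolding QL_def galgL_def by blast

lemma cQ_alt: "cQ c = Fract (Poly_Mapping.single (emb (0::'v::euclidean_space)) c) 1"
  by (simp add: cQ_def emb_zero)

lemma QL_cQ: "cQ c \<in> QL (UNIV :: 'v::euclidean_space set)"
  unfolding cQ_alt[where 'v='v] by (intro QL_Fract galgL_single galgL_one)

lemma QL_zmon: "zmon (v::'v::euclidean_space) \<in> QL (UNIV :: 'v set)"
  unfolding zmon_def by (intro QL_Fract galgL_single galgL_one)

lemma QL_zaff: "zaff q (a::'v::euclidean_space \<times> real) \<in> QL (UNIV :: 'v set)"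
  unfolding zaff_def by (intro QL_mult QL_cQ QL_zmon)

lemma cQ_one[simp]: "cQ 1 = 1"
  by (simp add: cQ_def fract_collapse)

lemma cQ_zero[simp]: "cQ 0 = 0"
  by (simp add: cQ_def fract_collapse)

lemma cQ_uminus: "cQ (- a) = - cQ a"
  by (simp add: cQ_def single_uminus)

lemma cQ_inj: "cQ a = cQ b \<Longrightarrow> a = b"
  by (simp add: cQ_def eq_fract) (metis lookup_single_eq)

lemma zmon_add: "zmon (a + b) = zmon a * zmon (b::'v::euclidean_space)"
  by (simp add: zmon_def mult_single emb_add)

lemma Fract_1_inj: "Fract a 1 = Fract b 1 \<Longrightarrow> a = b"
  by (simp add: eq_fract)

lemma actA_nonzero:
  fixes g :: "'v::euclidean_space \<Rightarrow> 'v"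
  shows "0 < q \<Longrightarrow> aff_isometry g \<Longrightarrow> b \<in> galgL (UNIV::'v set) \<Longrightarrow> b \<noteq> 0 \<Longrightarrow> actA q g b \<noteq> 0"
  using actA_eq_0 by blast

text \<open>\<open>actQ\<close> is defined by choice over all representing fractions; it is well defined because
  \<open>actA\<close> is multiplicative and injective.\<close>

lemma actQ_Fract:
  fixes g :: "'v::euclidean_space \<Rightarrow> 'v"
  assumes q: "0 < q" and g: "aff_isometry g" and a: "a \<in> galgL (UNIV::'v set)" and b: "b \<in> galgL (UNIV::'v set)"
    and b0: "b \<noteq> 0"
  shows "actQ q g (Fract a b) = Fract (actA q g a) (actA q g b)"
  unfolding actQ_def
proof (rule the_equality)
  show "\<forall>a' b'. a' \<in> galgL (UNIV::'v set) \<and> b' \<in> galgL (UNIV::'v set) \<and> b' \<noteq> 0 \<and> Fract a b = Fract a' b' \<longrightarrow>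
        Fract (actA q g a) (actA q g b) = Fract (actA q g a') (actA q g b')"
  proof (intro allI impI, elim conjE)
    fix a' b' assume a': "a' \<in> galgL (UNIV::'v set)" and b': "b' \<in> galgL (UNIV::'v set)" and b'0: "b' \<noteq> 0"
      and e: "Fract a b = Fract a' b'"
    have "a * b' = a' * b" using e b0 b'0 by (simp add: eq_fract)
    then have "actA q g a * actA q g b' = actA q g a' * actA q g b"
      by (metis actA_mult[OF g a b'] actA_mult[OF g a' b])
    then show "Fract (actA q g a) (actA q g b) = Fract (actA q g a') (actA q g b')"
      using actA_nonzero[OF q g b b0] actA_nonzero[OF q g b' b'0] by (simp add: eq_fract)
  qed
next
  fix y assume "\<forall>a' b'. a' \<in> galgL (UNIV::'v set) \<and> b' \<in> galgL (UNIV::'v set) \<and> b' \<noteq> 0 \<and> Fract a b = Fract a' b' \<longrightarrow>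
        y = Fract (actA q g a') (actA q g b')"
  then show "y = Fract (actA q g a) (actA q g b)" using a b b0 by blast
qed

context
  fixes q :: real and g :: "'v::euclidean_space \<Rightarrow> 'v"
  assumes q: "0 < q" and g: "aff_isometry g"
begin

lemma actQ_QL: "x \<in> QL (UNIV :: 'v set) \<Longrightarrow> actQ q g x \<in> QL (UNIV :: 'v set)"
  by (erule QL_UNIV_cases) (simp add: actQ_Fract[OF q g] QL_Fract galgL_actA)

lemma actQ_add: "x \<in> QL (UNIV :: 'v set) \<Longrightarrow> y \<in> QL (UNIV :: 'v set) \<Longrightarrow> actQ q g (x + y) = actQ q g x + actQ q g y"
proof -
  assume x: "x \<in> QL (UNIV :: 'v set)" and y: "y \<in> QL (UNIV :: 'v set)"
  from x obtain a b where ab: "a \<in> galgL (UNIV::'v set)" "b \<in> galgL (UNIV::'v set)" "b \<noteq> 0" "x = Fract a b"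
    by (rule QL_UNIV_cases)
  from y obtain c d where cd: "c \<in> galgL (UNIV::'v set)" "d \<in> galgL (UNIV::'v set)" "d \<noteq> 0" "y = Fract c d"
    by (rule QL_UNIV_cases)
  have nz: "actA q g b \<noteq> 0" "actA q g d \<noteq> 0" using actA_nonzero[OF q g] ab cd by auto
  have "x + y = Fract (a * d + c * b) (b * d)" using ab cd by simp
  then have "actQ q g (x + y) = Fract (actA q g (a * d + c * b)) (actA q g (b * d))"
    using ab cd by (simp add: actQ_Fract[OF q g] galgL_add galgL_mult)
  also have "\<dots> = actQ q g x + actQ q g y"
    using ab cd nz by (simp add: actQ_Fract[OF q g] actA_add actA_mult[OF g])
  finally show ?thesis .
qed

lemma actQ_mult: "x \<in> QL (UNIV :: 'v set) \<Longrightarrow> y \<in> QL (UNIV :: 'v set) \<Longrightarrow> actQ q g (x * y) = actQ q g x * actQ q g y"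
proof -
  assume x: "x \<in> QL (UNIV :: 'v set)" and y: "y \<in> QL (UNIV :: 'v set)"
  from x obtain a b where ab: "a \<in> galgL (UNIV::'v set)" "b \<in> galgL (UNIV::'v set)" "b \<noteq> 0" "x = Fract a b"
    by (rule QL_UNIV_cases)
  from y obtain c d where cd: "c \<in> galgL (UNIV::'v set)" "d \<in> galgL (UNIV::'v set)" "d \<noteq> 0" "y = Fract c d"
    by (rule QL_UNIV_cases)
  have "x * y = Fract (a * c) (b * d)" using ab cd by simp
  then show ?thesis
    using ab cd by (simp add: actQ_Fract[OF q g] galgL_mult actA_mult[OF g])
qed

lemma actQ_zero: "actQ q g 0 = 0"
proof -
  have "actQ q g (Fract 0 1) = Fract (actA q g 0) (actA q g 1)"
    by (rule actQ_Fract[OF q g galgL_zero galgL_one]) simp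
  then show ?thesis by (simp add: fract_collapse)
qed

lemma actQ_one: "actQ q g 1 = 1"
proof -
  have "actQ q g (Fract 1 1) = Fract (actA q g 1) (actA q g 1)"
    by (rule actQ_Fract[OF q g galgL_one galgL_one]) simp
  then show ?thesis by (simp add: fract_collapse actA_one[OF q])
qed

lemma actQ_sum: "(\<And>i. i \<in> I \<Longrightarrow> f i \<in> QL (UNIV :: 'v set)) \<Longrightarrow> actQ q g (sum f I) = (\<Sum>i\<in>I. actQ q g (f i))"
proof (induction I rule: infinite_finite_induct)
  case (infinite A) then show ?case by (simp add: actQ_zero)
next
  case empty then show ?case by (simp add: actQ_zero)
next
  case (insert x F)
  then show ?case by (simp add: actQ_add QL_sum)
qed

lemma actQ_power: "x \<in> QL (UNIV :: 'v set) \<Longrightarrow> actQ q g (x ^ n) = actQ q g x ^ n"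
  by (induction n) (simp_all add: actQ_one actQ_mult QL_power)

lemma actQ_cQ: "actQ q g (cQ c) = cQ c"
proof -
  have "actQ q g (Fract (Poly_Mapping.single (emb (0::'v)) c) 1)
     = Fract (actA q g (Poly_Mapping.single (emb (0::'v)) c)) (actA q g 1)"
    by (rule actQ_Fract[OF q g galgL_single galgL_one]) simp
  also have "\<dots> = Fract (Poly_Mapping.single (emb (0::'v)) c) 1"
    unfolding actA_single_emb actA_one[OF q] using q by simp
  finally show ?thesis unfolding cQ_alt[where 'v='v] .
qed

lemma zmon_alt: "zmon v = Fract (Poly_Mapping.single (emb v) 1) 1"
  by (simp add: zmon_def)

lemma cQ_zmon: "cQ c * zmon v = Fract (Poly_Mapping.single (emb v) c) 1"
  by (simp add: cQ_def zmon_def mult_single)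

lemma actQ_zmon: "actQ q g (zmon v) = cQ (complex_of_real (q powr (- (g 0 \<bullet> (g v - g 0))))) * zmon (g v - g 0)"
proof -
  have "actQ q g (zmon v) = Fract (Poly_Mapping.single (emb (g v - g 0)) (complex_of_real (q powr (- (g 0 \<bullet> (g v - g 0)))))) 1"
    unfolding zmon_alt
    by (simp add: actQ_Fract[OF q g] galgL_single galgL_one actA_single_emb actA_one[OF q])
  also have "\<dots> = cQ (complex_of_real (q powr (- (g 0 \<bullet> (g v - g 0))))) * zmon (g v - g 0)"
    by (rule cQ_zmon[symmetric])
  finally show ?thesis .
qed

end

lemma actQ_comp:
  fixes g1 g2 :: "'v::euclidean_space \<Rightarrow> 'v"
  assumes q: "0 < q" and g1: "aff_isometry g1" and g2: "aff_isometry g2" and x: "x \<in> QL (UNIV :: 'v set)"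
  shows "actQ q (g1 \<circ> g2) x = actQ q g1 (actQ q g2 x)"
proof -
  from x obtain a b where ab: "a \<in> galgL (UNIV::'v set)" "b \<in> galgL (UNIV::'v set)" "b \<noteq> 0" "x = Fract a b"
    by (rule QL_UNIV_cases)
  have nz: "actA q g2 b \<noteq> 0" using actA_nonzero[OF q g2] ab by auto
  show ?thesis using ab nz
    by (simp add: actQ_Fract[OF q aff_isometry_comp[OF g1 g2]] actQ_Fract[OF q g2] actQ_Fract[OF q g1]
        galgL_actA actA_comp[OF g1 g2])
qed

lemma actQ_id:
  assumes q: "0 < q" and x: "x \<in> QL (UNIV :: 'v::euclidean_space set)"
  shows "actQ q (id::'v\<Rightarrow>'v) x = x"
proof -
  from x obtain a b where ab: "a \<in> galgL (UNIV::'v set)" "b \<in> galgL (UNIV::'v set)" "b \<noteq> 0" "x = Fract a b"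
    by (rule QL_UNIV_cases)
  show ?thesis using ab by (simp add: actQ_Fract[OF q aff_isometry_id] actA_id[OF q])
qed

section \<open>Operators in the smash product\<close>

definition wf_dop :: "'v::euclidean_space dop \<Rightarrow> bool" where
  "wf_dop D \<longleftrightarrow> finite (dsupp D) \<and> (\<forall>g\<in>dsupp D. aff_isometry g) \<and> (\<forall>g. D g \<in> QL (UNIV::'v set))"

lemma wf_dopD: "wf_dop D \<Longrightarrow> finite (dsupp D)" "wf_dop D \<Longrightarrow> g \<in> dsupp D \<Longrightarrow> aff_isometry g"
  "wf_dop (D::'v::euclidean_space dop) \<Longrightarrow> D g \<in> QL (UNIV::'v set)"
  by (auto simp: wf_dop_def)

lemma dsupp_iff: "g \<in> dsupp D \<longleftrightarrow> D g \<noteq> 0"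
  by (simp add: dsupp_def)

lemma dapply_superset:
  assumes "finite S" "dsupp D \<subseteq> S"
  shows "dapply q D f = (\<Sum>g\<in>S. D g * actQ q g f)"
  unfolding dapply_def
  by (rule sum.mono_neutral_left[OF assms]) (auto simp: dsupp_iff)

lemma dsupp_dmult: "dsupp (dmult q D E) \<subseteq> (\<lambda>p. fst p \<circ> snd p) ` (dsupp D \<times> dsupp E)"
proof
  fix g assume "g \<in> dsupp (dmult q D E)"
  then have nz: "dmult q D E g \<noteq> 0" by (simp add: dsupp_iff)
  have "{(g1, g2). g1 \<in> dsupp D \<and> g2 \<in> dsupp E \<and> g1 \<circ> g2 = g} \<noteq> {}"
  proof
    assume "{(g1, g2). g1 \<in> dsupp D \<and> g2 \<in> dsupp E \<and> g1 \<circ> g2 = g} = {}"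
    then have "dmult q D E g = 0" unfolding dmult_def by (simp only: sum.empty)
    with nz show False by simp
  qed
  then show "g \<in> (\<lambda>p. fst p \<circ> snd p) ` (dsupp D \<times> dsupp E)" by force
qed

lemma dmult_alt:
  "dmult q D E g = (\<Sum>p\<in>{p\<in>dsupp D \<times> dsupp E. fst p \<circ> snd p = g}. D (fst p) * actQ q (fst p) (E (snd p)))"
  unfolding dmult_def by (rule sum.cong) auto

lemma wf_dop_dmult:
  assumes q: "0 < q" and D: "wf_dop D" and E: "wf_dop (E::'v::euclidean_space dop)"
  shows "wf_dop (dmult q D E)"
  unfolding wf_dop_def
proof (intro conjI ballI allI)
  show "finite (dsupp (dmult q D E))"
    by (rule finite_subset[OF dsupp_dmult]) (simp add: wf_dopD(1)[OF D] wf_dopD(1)[OF E])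
  show "aff_isometry g" if "g \<in> dsupp (dmult q D E)" for g
    using that dsupp_dmult[of q D E] wf_dopD(2)[OF D] wf_dopD(2)[OF E] by (force intro: aff_isometry_comp)
  show "dmult q D E g \<in> QL (UNIV::'v set)" for g
    unfolding dmult_alt
    by (intro QL_sum QL_mult wf_dopD(3)[OF D] actQ_QL[OF q] wf_dopD(3)[OF E]) (auto intro: wf_dopD(2)[OF D])
qed

lemma dapply_QL:
  fixes D :: "'v::euclidean_space dop"
  assumes q: "0 < q" and D: "wf_dop D" and f: "f \<in> QL (UNIV::'v::euclidean_space set)"
  shows "dapply q D f \<in> QL (UNIV::'v set)"
  unfolding dapply_def
  by (intro QL_sum QL_mult wf_dopD(3)[OF D] actQ_QL[OF q] f) (auto intro: wf_dopD(2)[OF D])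

lemma dapply_mult:
  fixes D :: "'v::euclidean_space dop"
  assumes q: "0 < q" and D: "wf_dop D" and E: "wf_dop (E::'v::euclidean_space dop)"
    and f: "f \<in> QL (UNIV::'v set)"
  shows "dapply q (dmult q D E) f = dapply q D (dapply q E f)"
proof -
  let ?P = "dsupp D \<times> dsupp E"
  let ?h = "\<lambda>p::('v\<Rightarrow>'v)\<times>('v\<Rightarrow>'v). fst p \<circ> snd p"
  let ?F = "\<lambda>p::('v\<Rightarrow>'v)\<times>('v\<Rightarrow>'v). D (fst p) * actQ q (fst p) (E (snd p))"
  have fP: "finite ?P" using wf_dopD(1)[OF D] wf_dopD(1)[OF E] by simp
  have "dapply q (dmult q D E) f = (\<Sum>g\<in>?h ` ?P. dmult q D E g * actQ q g f)"
    by (rule dapply_superset[OF finite_imageI[OF fP] dsupp_dmult])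
  also have "\<dots> = (\<Sum>g\<in>?h ` ?P. \<Sum>p\<in>{p\<in>?P. ?h p = g}. ?F p * actQ q (?h p) f)"
    unfolding dmult_alt sum_distrib_right by (rule sum.cong[OF refl], rule sum.cong) auto
  also have "\<dots> = (\<Sum>p\<in>?P. ?F p * actQ q (?h p) f)"
    by (rule sum.image_gen[OF fP, symmetric])
  also have "\<dots> = (\<Sum>(g1,g2)\<in>?P. D g1 * (actQ q g1 (E g2) * actQ q g1 (actQ q g2 f)))"
  proof (rule sum.cong[OF refl])
    fix p assume p: "p \<in> ?P"
    obtain g1 g2 where p12: "p = (g1, g2)" by (cases p)
    have g1: "aff_isometry g1" and g2: "aff_isometry g2" using p p12 wf_dopD(2)[OF D] wf_dopD(2)[OF E] by auto
    show "?F p * actQ q (?h p) f = (case p of (g1, g2) \<Rightarrow> D g1 * (actQ q g1 (E g2) * actQ q g1 (actQ q g2 f)))"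
      by (simp add: p12 actQ_comp[OF q g1 g2 f] mult.assoc)
  qed
  also have "\<dots> = (\<Sum>g1\<in>dsupp D. \<Sum>g2\<in>dsupp E. D g1 * (actQ q g1 (E g2) * actQ q g1 (actQ q g2 f)))"
    by (rule sum.cartesian_product[symmetric])
  also have "\<dots> = dapply q D (dapply q E f)"
    unfolding dapply_def
  proof (rule sum.cong[OF refl])
    fix g1 assume g1: "g1 \<in> dsupp D"
    have gg1: "aff_isometry g1" using wf_dopD(2)[OF D g1] .
    have "actQ q g1 (\<Sum>g2\<in>dsupp E. E g2 * actQ q g2 f) = (\<Sum>g2\<in>dsupp E. actQ q g1 (E g2 * actQ q g2 f))"
      by (rule actQ_sum[OF q gg1]) (intro QL_mult wf_dopD(3)[OF E] actQ_QL[OF q] f, auto intro: wf_dopD(2)[OF E])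
    also have "\<dots> = (\<Sum>g2\<in>dsupp E. actQ q g1 (E g2) * actQ q g1 (actQ q g2 f))"
      by (rule sum.cong[OF refl], rule actQ_mult[OF q gg1 wf_dopD(3)[OF E] actQ_QL[OF q _ f]])
        (auto intro: wf_dopD(2)[OF E])
    finally show "(\<Sum>g2\<in>dsupp E. D g1 * (actQ q g1 (E g2) * actQ q g1 (actQ q g2 f)))
        = D g1 * actQ q g1 (\<Sum>g2\<in>dsupp E. E g2 * actQ q g2 f)"
      by (simp add: sum_distrib_left)
  qed
  finally show ?thesis .
qed

lemma dsupp_dterm: "dsupp (dterm f w) = (if f = 0 then {} else {w})"
  by (auto simp: dsupp_def dterm_def)

lemma wf_dop_dterm: "aff_isometry w \<Longrightarrow> f \<in> QL (UNIV::'v::euclidean_space set) \<Longrightarrow> wf_dop (dterm f (w::'v \<Rightarrow> 'v))"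
  unfolding wf_dop_def dsupp_dterm by (auto simp: dterm_def QL_zero)

lemma dapply_dterm: "dapply q (dterm f w) x = f * actQ q w x"
  unfolding dapply_def dsupp_dterm by (simp add: dterm_def)

lemma dsupp_dadd: "dsupp (dadd D E) \<subseteq> dsupp D \<union> dsupp E"
  by (auto simp: dsupp_def dadd_def)

lemma wf_dop_dadd: "wf_dop D \<Longrightarrow> wf_dop E \<Longrightarrow> wf_dop (dadd D (E::'v::euclidean_space dop))"
  unfolding wf_dop_def using dsupp_dadd[of D E]
  by (auto simp: dadd_def intro: QL_add finite_subset)

lemma dapply_dadd: "wf_dop D \<Longrightarrow> wf_dop E \<Longrightarrow> dapply q (dadd D E) f = dapply q D f + dapply q E f"
proof -
  assume D: "wf_dop D" and E: "wf_dop E"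
  let ?S = "dsupp D \<union> dsupp E"
  have fS: "finite ?S" using wf_dopD(1)[OF D] wf_dopD(1)[OF E] by simp
  show ?thesis
    unfolding dapply_superset[OF fS dsupp_dadd] dapply_superset[OF fS Un_upper1]
      dapply_superset[OF fS Un_upper2]
    by (simp add: dadd_def distrib_right sum.distrib)
qed

lemma dapply_diff:
  assumes "wf_dop X" "wf_dop Y"
  shows "dapply q (\<lambda>h. X h - Y h) f = dapply q X f - dapply q Y f"
proof -
  let ?S = "dsupp X \<union> dsupp Y"
  have fS: "finite ?S" using assms by (simp add: wf_dopD(1))
  have sub: "dsupp (\<lambda>h. X h - Y h) \<subseteq> ?S" by (auto simp: dsupp_iff)
  show ?thesis
    unfolding dapply_superset[OF fS sub] dapply_superset[OF fS Un_upper1]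
      dapply_superset[OF fS Un_upper2]
    by (simp add: left_diff_distrib sum_subtractf)
qed

lemma dsupp_dscal: "dsupp (dscal c D) \<subseteq> dsupp D"
  by (auto simp: dsupp_def dscal_def)

lemma wf_dop_dscal: "wf_dop D \<Longrightarrow> wf_dop (dscal c (D::'v::euclidean_space dop))"
  unfolding wf_dop_def using dsupp_dscal[of c D]
  by (auto simp: dscal_def intro: QL_mult QL_cQ finite_subset)

lemma dapply_dscal: "wf_dop D \<Longrightarrow> dapply q (dscal c D) f = cQ c * dapply q D f"
proof -
  assume D: "wf_dop D"
  have "dapply q (dscal c D) f = (\<Sum>g\<in>dsupp D. dscal c D g * actQ q g f)"
    by (rule dapply_superset[OF wf_dopD(1)[OF D] dsupp_dscal])
  also have "\<dots> = cQ c * dapply q D f"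
    by (simp add: dapply_def dscal_def sum_distrib_left mult.assoc)
  finally show ?thesis .
qed

lemma wf_dop_dunit: "wf_dop (dunit :: 'v::euclidean_space dop)"
  unfolding dunit_def by (rule wf_dop_dterm[OF aff_isometry_id QL_one])

lemma dapply_dunit: "0 < q \<Longrightarrow> f \<in> QL (UNIV::'v::euclidean_space set) \<Longrightarrow> dapply q (dunit :: 'v dop) f = f"
  unfolding dunit_def dapply_dterm by (simp add: actQ_id)

lemma dapply_cQ:
  fixes D :: "'v::euclidean_space dop"
  assumes q: "0 < q" and D: "wf_dop D" and f: "f \<in> QL (UNIV::'v::euclidean_space set)"
  shows "dapply q D (cQ c * f) = cQ c * dapply q D f"
  unfolding dapply_def sum_distrib_left
proof (rule sum.cong[OF refl])
  fix g assume "g \<in> dsupp D"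
  then have g: "aff_isometry g" by (rule wf_dopD(2)[OF D])
  show "D g * actQ q g (cQ c * f) = cQ c * (D g * actQ q g f)"
    by (simp add: actQ_mult[OF q g QL_cQ f] actQ_cQ[OF q g])
qed

section \<open>Reflections and the finite Weyl group\<close>

lemma reflection_formula: "reflection a x = x - (x \<bullet> coroot a) *\<^sub>R a"
  by (simp add: reflection_def coroot_def)

lemma reflection_add: "reflection a (x + y) = reflection a x + reflection a y"
  by (simp add: reflection_def inner_add_left add_divide_distrib algebra_simps)

lemma reflection_scale: "reflection a (c *\<^sub>R x) = c *\<^sub>R reflection a x"
  by (simp add: reflection_def algebra_simps)

lemma reflection_linear: "linear (reflection a)"
  by (rule linearI) (simp_all add: reflection_add reflection_scale)

lemma reflection_zero[simp]: "reflection a 0 = 0"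
  by (simp add: reflection_def)

lemma reflection_diff: "reflection a (x - y) = reflection a x - reflection a y"
  using linear_diff[OF reflection_linear] by blast

lemma reflection_inner: "reflection a x \<bullet> reflection a y = x \<bullet> y"
proof (cases "a = 0")
  case True then show ?thesis by (simp add: reflection_def)
next
  case False
  then have aa: "a \<bullet> a \<noteq> 0" by simp
  show ?thesis using aa
    by (simp add: reflection_def inner_diff_left inner_diff_right inner_commute field_simps)
qed

lemma reflection_reflection[simp]: "reflection a (reflection a x) = x"
proof (cases "a = 0")
  case True then show ?thesis by (simp add: reflection_def)
next
  case False
  then have aa: "a \<bullet> a \<noteq> 0" by simp
  show ?thesis using aa
    by (simp add: reflection_def inner_diff_left field_simps)
qed

lemma aff_isometry_reflection: "aff_isometry (reflection a)"
  unfolding aff_isometry_def using reflection_linear[of a] by (simp add: reflection_inner)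

lemma reflection_self: "reflection a a = - a"
proof (cases "a = 0")
  case True then show ?thesis by (simp add: reflection_def)
next
  case False
  then show ?thesis by (simp add: reflection_def algebra_simps) (simp add: scaleR_2)
qed

lemma reflection_scaleR_root: "c \<noteq> 0 \<Longrightarrow> reflection (c *\<^sub>R a) = reflection a"
  by (rule ext) (simp add: reflection_def field_simps)

lemma reflection_uminus_root: "reflection (- a) = reflection a"
  using reflection_scaleR_root[of "-1" a] by simp

lemma coroot_zero[simp]: "coroot 0 = 0"
  by (simp add: coroot_def)

lemma reflection_coroot: "reflection (coroot a) = reflection a"
proof (cases "a = 0")
  case True then show ?thesis by simp
next
  case False
  then show ?thesis unfolding coroot_def by (intro reflection_scaleR_root) simp
qed

lemma reflection_inner_sym: "reflection s x \<bullet> y = x \<bullet> reflection s y"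
proof -
  have "reflection s x \<bullet> y = reflection s x \<bullet> reflection s (reflection s y)" by simp
  also have "\<dots> = x \<bullet> reflection s y" by (rule reflection_inner)
  finally show ?thesis .
qed

lemma reflection_conj: "reflection (reflection s a) = reflection s \<circ> reflection a \<circ> reflection s"
proof (rule ext)
  fix x
  have n: "reflection s a \<bullet> reflection s a = a \<bullet> a" by (rule reflection_inner)
  have "(reflection s \<circ> reflection a \<circ> reflection s) x
      = reflection s (reflection s x - (2 * (reflection s x \<bullet> a) / (a \<bullet> a)) *\<^sub>R a)"
    by (simp add: reflection_def[of a])
  also have "\<dots> = x - (2 * (x \<bullet> reflection s a) / (a \<bullet> a)) *\<^sub>R reflection s a"
    by (simp add: reflection_diff reflection_scale reflection_inner_sym)
  also have "\<dots> = reflection (reflection s a) x"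
    by (simp add: reflection_def[of "reflection s a"] n)
  finally show "reflection (reflection s a) x = (reflection s \<circ> reflection a \<circ> reflection s) x" ..
qed

lemma root_system_nonzero: "root_system R \<Longrightarrow> 0 \<notin> R"
  by (simp add: root_system_def)

lemma root_system_finite: "root_system R \<Longrightarrow> finite R"
  by (simp add: root_system_def)

lemma root_system_span: "root_system R \<Longrightarrow> span R = UNIV"
  by (simp add: root_system_def)

lemma root_system_reflection_image: "root_system R \<Longrightarrow> \<forall>a\<in>R. reflection a ` R = R"
  by (simp add: root_system_def)

definition refl_prod :: "'v::euclidean_space list \<Rightarrow> 'v \<Rightarrow> 'v" where
  "refl_prod as = foldr (\<lambda>a f. reflection a \<circ> f) as id"

lemma weyl_group_iff: "w \<in> weyl_group R \<longleftrightarrow> (\<exists>as. set as \<subseteq> R \<and> w = refl_prod as)"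
  unfolding weyl_group_def refl_prod_def by blast

lemma refl_prod_Nil[simp]: "refl_prod [] = id" by (simp add: refl_prod_def)

lemma refl_prod_Cons[simp]: "refl_prod (a # as) = reflection a \<circ> refl_prod as" by (simp add: refl_prod_def)

lemma refl_prod_append: "refl_prod (as @ bs) = refl_prod as \<circ> refl_prod bs"
  by (induction as) (auto simp: o_assoc)

lemma refl_prod_linear: "linear (refl_prod as)"
proof (induction as)
  case Nil then show ?case using linear_id unfolding id_def by simp
next
  case (Cons a as)
  show ?case by (simp only: refl_prod_Cons) (rule linear_compose[OF Cons.IH reflection_linear])
qed

lemma refl_prod_zero[simp]: "refl_prod as 0 = 0"
  by (induction as) auto

lemma refl_prod_inner: "refl_prod as x \<bullet> refl_prod as y = x \<bullet> y"
  by (induction as) (auto simp: reflection_inner)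

lemma aff_isometry_refl_prod: "aff_isometry (refl_prod as)"
  unfolding aff_isometry_def using refl_prod_linear[of as] by (simp add: refl_prod_inner)

lemma refl_prod_rev_app[simp]: "refl_prod (rev as) (refl_prod as x) = x"
  by (induction as arbitrary: x) (simp_all add: refl_prod_append)

lemma refl_prod_app_rev[simp]: "refl_prod as (refl_prod (rev as) x) = x"
  using refl_prod_rev_app[of "rev as" x] by simp

lemma refl_prod_rev_comp: "refl_prod (rev as) \<circ> refl_prod as = id"
  by (rule ext) simp

lemma refl_prod_comp_rev: "refl_prod as \<circ> refl_prod (rev as) = id"
  by (rule ext) simp

lemma refl_prod_inv: "inv (refl_prod as) = refl_prod (rev as)"
  by (rule inv_unique_comp[OF refl_prod_comp_rev refl_prod_rev_comp])

lemma W0_id: "id \<in> weyl_group R"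
  unfolding weyl_group_iff by (rule exI[of _ "[]"]) simp

lemma W0_comp: "v \<in> weyl_group R \<Longrightarrow> w \<in> weyl_group R \<Longrightarrow> v \<circ> w \<in> weyl_group R"
  unfolding weyl_group_iff by (metis set_append Un_subset_iff refl_prod_append)

lemma W0_inv: "w \<in> weyl_group R \<Longrightarrow> inv w \<in> weyl_group R"
  unfolding weyl_group_iff by (metis set_rev refl_prod_inv)

lemma W0_aff_isometry: "w \<in> weyl_group R \<Longrightarrow> aff_isometry w"
  unfolding weyl_group_iff using aff_isometry_refl_prod by blast

lemma W0_linear: "w \<in> weyl_group R \<Longrightarrow> linear w"
  unfolding weyl_group_iff using refl_prod_linear by blast

lemma W0_zero: "w \<in> weyl_group R \<Longrightarrow> w 0 = 0"
  unfolding weyl_group_iff by auto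

lemma W0_inner: "w \<in> weyl_group R \<Longrightarrow> w x \<bullet> w y = x \<bullet> y"
  unfolding weyl_group_iff using refl_prod_inner by blast

lemma W0_inv_l: "w \<in> weyl_group R \<Longrightarrow> inv w (w x) = x"
  unfolding weyl_group_iff by (auto simp: refl_prod_inv)

lemma W0_inv_r: "w \<in> weyl_group R \<Longrightarrow> w (inv w x) = x"
  unfolding weyl_group_iff by (auto simp: refl_prod_inv)

lemma W0_inj: "w \<in> weyl_group R \<Longrightarrow> inj w"
  by (metis W0_inv_l injI)

lemma W0_add: "w \<in> weyl_group R \<Longrightarrow> w (x + y) = w x + w y"
  using linear_add[OF W0_linear] by blast

lemma W0_reflection: "a \<in> R \<Longrightarrow> reflection a \<in> weyl_group R"
  unfolding weyl_group_iff by (rule exI[of _ "[a]"]) simp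

lemma refl_prod_image_roots:
  assumes "\<forall>a\<in>R. reflection a ` R = R" "set as \<subseteq> R"
  shows "refl_prod as ` R = R"
  using assms(2)
proof (induction as)
  case Nil then show ?case by simp
next
  case (Cons a as)
  then have "refl_prod (a # as) ` R = reflection a ` (refl_prod as ` R)" by (simp only: refl_prod_Cons image_comp)
  also have "\<dots> = R" using Cons assms(1) by simp
  finally show ?case .
qed

lemma W0_image_roots: "\<forall>a\<in>R. reflection a ` R = R \<Longrightarrow> w \<in> weyl_group R \<Longrightarrow> w ` R = R"
  unfolding weyl_group_iff using refl_prod_image_roots by blast

lemma W0_coroot: "w \<in> weyl_group R \<Longrightarrow> coroot (w a) = w (coroot a)"
  by (simp add: coroot_def W0_inner linear_scale[OF W0_linear])

lemma root_basis_coeff_unique: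
  assumes rb: "root_basis R (al :: nat \<Rightarrow> 'v::euclidean_space)"
    and e: "(\<Sum>i=1..DIM('v). of_int (c i) *\<^sub>R al i) = (\<Sum>i=1..DIM('v). of_int (d i) *\<^sub>R al i)"
    and i: "i \<in> {1..DIM('v)}"
  shows "c i = d i"
proof -
  let ?I = "{1..DIM('v)}"
  have inj: "inj_on al ?I" and ind: "independent (al ` ?I)" using rb by (auto simp: root_basis_def)
  define u where "u v = real_of_int (c (inv_into ?I al v) - d (inv_into ?I al v))" for v
  have "(\<Sum>v\<in>al ` ?I. u v *\<^sub>R v) = (\<Sum>j\<in>?I. u (al j) *\<^sub>R al j)"
    by (rule sum.reindex[OF inj, unfolded o_def])
  also have "\<dots> = (\<Sum>j\<in>?I. of_int (c j) *\<^sub>R al j - of_int (d j) *\<^sub>R al j)"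
  proof (rule sum.cong[OF refl])
    fix j assume j: "j \<in> ?I"
    show "u (al j) *\<^sub>R al j = of_int (c j) *\<^sub>R al j - of_int (d j) *\<^sub>R al j"
      unfolding u_def inv_into_f_f[OF inj j] by (simp add: scaleR_diff_left)
  qed
  also have "\<dots> = 0" using e by (simp add: sum_subtractf)
  finally have "(\<Sum>v\<in>al ` ?I. u v *\<^sub>R v) = 0" .
  then have "u (al i) = 0"
    using ind i unfolding independent_explicit_module by blast
  then show ?thesis unfolding u_def inv_into_f_f[OF inj i] by simp
qed

lemma sum_scaleR_update:
  fixes al :: "nat \<Rightarrow> 'v::real_vector"
  assumes "i \<in> I" "finite I"
  shows "(\<Sum>j\<in>I. of_int (c j - (if j = i then k else 0)) *\<^sub>R al j)
       = (\<Sum>j\<in>I. of_int (c j) *\<^sub>R al j) - of_int k *\<^sub>R al i"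
proof -
  have "(\<Sum>j\<in>I. of_int (c j - (if j = i then k else 0)) *\<^sub>R al j)
      = (\<Sum>j\<in>I. of_int (c j) *\<^sub>R al j - (if j = i then of_int k *\<^sub>R al j else 0))"
    by (rule sum.cong[OF refl]) (simp add: scaleR_diff_left)
  also have "\<dots> = (\<Sum>j\<in>I. of_int (c j) *\<^sub>R al j) - of_int k *\<^sub>R al i"
    using assms by (simp add: sum_subtractf sum.delta)
  finally show ?thesis .
qed

lemma positive_root_pairs_positively:
  fixes R :: "'v::euclidean_space set" and al :: "nat \<Rightarrow> 'v"
  assumes rs: "root_system R" and rb: "root_basis R al"
    and aR: "a \<in> R" and ac: "a = (\<Sum>i=1..DIM('v). of_int (c i) *\<^sub>R al i)" and cpos: "\<forall>i. c i \<ge> 0"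
  obtains i k where "i \<in> {1..DIM('v)}" "c i > 0" "a \<bullet> coroot (al i) = of_int k" "k \<ge> 1"
proof -
  let ?I = "{1..DIM('v)}"
  have "0 < a \<bullet> a" using aR root_system_nonzero[OF rs] by auto
  also have "a \<bullet> a = (\<Sum>i\<in>?I. of_int (c i) * (al i \<bullet> a))"
    by (subst (1) ac) (simp add: inner_sum_left)
  finally obtain i where i: "i \<in> ?I" and pi: "0 < of_int (c i) * (al i \<bullet> a)"
    by (metis (no_types, lifting) not_less sum_nonpos)
  moreover have "0 \<le> c i" using cpos by blast
  ultimately have ci: "0 < c i" and ai: "0 < al i \<bullet> a"
    by (auto simp: zero_less_mult_iff)
  have alR: "al i \<in> R" using rb i unfolding root_basis_def by blast
  then have "a \<bullet> coroot (al i) \<in> \<int>" using rs aR unfolding root_system_def by blast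
  then obtain k where k: "a \<bullet> coroot (al i) = of_int k" by (auto elim: Ints_cases)
  have "al i \<noteq> 0" using alR root_system_nonzero[OF rs] by metis
  then have "0 < a \<bullet> coroot (al i)" using ai by (simp add: coroot_def inner_commute)
  then have "k \<ge> 1" using k by simp
  with i ci k show ?thesis by (rule that)
qed

lemma positive_root_descent:
  fixes R :: "'v::euclidean_space set" and al :: "nat \<Rightarrow> 'v"
  assumes rs: "root_system R" and rb: "root_basis R al"
    and aR: "a \<in> R" and ac: "a = (\<Sum>i=1..DIM('v). of_int (c i) *\<^sub>R al i)" and cpos: "\<forall>i. c i \<ge> 0"
  obtains (simple) i where "i \<in> {1..DIM('v)}" "reflection a = reflection (al i)"
    | (lower) i d where "i \<in> {1..DIM('v)}" "reflection (al i) a \<in> R"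
        "reflection (al i) a = (\<Sum>j=1..DIM('v). of_int (d j) *\<^sub>R al j)" "\<forall>j. d j \<ge> 0"
        "sum d {1..DIM('v)} < sum c {1..DIM('v)}"
proof -
  let ?I = "{1..DIM('v)}"
  obtain i k where i: "i \<in> ?I" and ci: "c i > 0" and k: "a \<bullet> coroot (al i) = of_int k"
    and k1: "k \<ge> 1"
    by (rule positive_root_pairs_positively[OF rs rb aR ac cpos])
  show ?thesis
  proof (cases "\<forall>j\<in>?I - {i}. c j = 0")
    case True
    have "a = (\<Sum>j\<in>?I. if j = i then of_int (c i) *\<^sub>R al i else 0)"
      by (subst ac, rule sum.cong[OF refl]) (use True in auto)
    also have "\<dots> = of_int (c i) *\<^sub>R al i" using i by (simp add: sum.delta)
    finally have "reflection a = reflection (al i)"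
      using ci by (simp add: reflection_scaleR_root)
    with i show ?thesis by (rule simple)
  next
    case False
    then obtain j where j: "j \<in> ?I" "j \<noteq> i" "c j \<noteq> 0" by blast
    have alR: "al i \<in> R" using rb i unfolding root_basis_def by blast
    have bR: "reflection (al i) a \<in> R"
      using rs alR aR unfolding root_system_def by blast
    define c' where "c' j = c j - (if j = i then k else 0)" for j
    have bc': "reflection (al i) a = (\<Sum>j\<in>?I. of_int (c' j) *\<^sub>R al j)"
      unfolding c'_def sum_scaleR_update[OF i finite_atLeastAtMost] reflection_formula k
      by (subst ac) simp
    obtain d where bd: "reflection (al i) a = (\<Sum>j\<in>?I. of_int (d j) *\<^sub>R al j)"
      and dsign: "(\<forall>j. d j \<ge> 0) \<or> (\<forall>j. d j \<le> 0)"
      using bR rb unfolding root_basis_def by blast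
    have dc: "\<And>l. l \<in> ?I \<Longrightarrow> d l = c' l"
      by (rule root_basis_coeff_unique[OF rb]) (use bd bc' in simp)
    have "d j = c j" using dc[OF j(1)] j(2) by (simp add: c'_def)
    then have "d j > 0" using cpos j(3) by (metis less_le)
    have dpos: "\<forall>l. d l \<ge> 0"
    proof (rule disjE[OF dsign])
      assume "\<forall>l. d l \<le> 0"
      with \<open>d j > 0\<close> show ?thesis by (meson not_le)
    qed
    have "sum d ?I = sum c' ?I" using dc by (rule sum.cong[OF refl])
    also have "\<dots> = sum c ?I - k" unfolding c'_def using i by (simp add: sum_subtractf sum.delta)
    finally have "sum d ?I < sum c ?I" using k1 by linarith
    with i bR bd dpos show ?thesis by (rule lower)
  qed
qed

text \<open>Induction on the height of a positive root; a negative root gives the same reflection as its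
  positive opposite.\<close>

lemma simple_reflections_generate:
  fixes R :: "'v::euclidean_space set" and al :: "nat \<Rightarrow> 'v"
  assumes rs: "root_system R" and rb: "root_basis R al"
    and comp: "\<And>g h. P g \<Longrightarrow> P h \<Longrightarrow> P (g \<circ> h)"
    and simple: "\<And>i. i \<in> {1..DIM('v)} \<Longrightarrow> P (reflection (al i))"
    and a: "a \<in> R"
  shows "P (reflection a)"
proof -
  let ?I = "{1..DIM('v)}"
  have pos: "P (reflection a)"
    if "a \<in> R" "a = (\<Sum>i\<in>?I. of_int (c i) *\<^sub>R al i)" "\<forall>i. c i \<ge> 0" for a c
    using that
  proof (induction "nat (sum c ?I)" arbitrary: a c rule: less_induct)
    case less
    show ?case
    proof (rule positive_root_descent[OF rs rb less.prems])
      fix i assume "i \<in> ?I" and "reflection a = reflection (al i)"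
      then show ?thesis using simple by simp
    next
      fix i d
      assume i: "i \<in> ?I" and bR: "reflection (al i) a \<in> R"
        and bd: "reflection (al i) a = (\<Sum>j\<in>?I. of_int (d j) *\<^sub>R al j)" and dpos: "\<forall>j. d j \<ge> 0"
        and lt: "sum d ?I < sum c ?I"
      have "0 \<le> sum d ?I" using dpos by (simp add: sum_nonneg)
      then have "nat (sum d ?I) < nat (sum c ?I)" using lt by linarith
      then have "P (reflection (reflection (al i) a))" using bR bd dpos by (rule less.hyps)
      then have "P (reflection (al i) \<circ> reflection (reflection (al i) a) \<circ> reflection (al i))"
        using comp simple[OF i] by blast
      also have "reflection (al i) \<circ> reflection (reflection (al i) a) \<circ> reflection (al i) = reflection a"
        by (simp add: reflection_conj fun_eq_iff)
      finally show ?thesis .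
    qed
  qed
  obtain c where ac: "a = (\<Sum>i\<in>?I. of_int (c i) *\<^sub>R al i)"
    and cs: "(\<forall>i. c i \<ge> 0) \<or> (\<forall>i. c i \<le> 0)"
    using a rb unfolding root_basis_def by blast
  from cs show ?thesis
  proof
    assume "\<forall>i. c i \<ge> 0"
    then show ?thesis using pos[OF a ac] by blast
  next
    assume "\<forall>i. c i \<le> 0"
    then have "\<forall>i. - c i \<ge> 0" by simp
    moreover have "- a \<in> R" using rs a reflection_self[of a] unfolding root_system_def by force
    moreover have "- a = (\<Sum>i\<in>?I. of_int (- c i) *\<^sub>R al i)" by (subst ac) (simp add: sum_negf)
    ultimately have "P (reflection (- a))" by (intro pos[of "- a" "\<lambda>i. - c i"])
    then show ?thesis by (simp add: reflection_uminus_root)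
  qed
qed

lemma weyl_group_induct:
  fixes R :: "'v::euclidean_space set" and al :: "nat \<Rightarrow> 'v"
  assumes rs: "root_system R" and rb: "root_basis R al"
    and comp: "\<And>g h. P g \<Longrightarrow> P h \<Longrightarrow> P (g \<circ> h)" and pid: "P id"
    and simple: "\<And>i. i \<in> {1..DIM('v)} \<Longrightarrow> P (reflection (al i))"
    and w: "w \<in> weyl_group R"
  shows "P w"
proof -
  from w obtain as where as: "set as \<subseteq> R" "w = refl_prod as" unfolding weyl_group_iff by blast
  have "P (refl_prod as)" using as(1)
  proof (induction as)
    case Nil then show ?case using pid by (simp add: id_def)
  next
    case (Cons a as)
    have a: "a \<in> R" and as': "set as \<subseteq> R" using Cons.prems by auto
    have "P (reflection a)" by (rule simple_reflections_generate[OF rs rb comp simple a])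
    then have "P (reflection a \<circ> refl_prod as)" using Cons.IH[OF as'] by (rule comp)
    then show ?case by (simp only: refl_prod_Cons)
  qed
  then show ?thesis using as by simp
qed

section \<open>Root systems of type C\<close>

context
  fixes R :: "'v::euclidean_space set" and E :: "nat \<Rightarrow> 'v"
  assumes tc: "typeC R E"
begin

text \<open>Short roots are indexed by ordered pairs \<open>i \<noteq> j\<close> rather than \<open>i < j\<close> as in \<open>typeC\<close>;
  the symmetric form is closed under permuting the basis vectors.\<close>

definition typeC_short :: "'v set" where
  "typeC_short = {s *\<^sub>R E i + t *\<^sub>R E j | s t i j. s \<in> {1,-1} \<and> t \<in> {1,-1} \<and> i \<in> {1..DIM('v)} \<and> j \<in> {1..DIM('v)} \<and> i \<noteq> j}"

definition typeC_long :: "'v set" where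
  "typeC_long = {(2 * s) *\<^sub>R E m | s m. s \<in> {1,-1} \<and> m \<in> {1..DIM('v)}}"

lemma typeC_orthonormal: "i \<in> {1..DIM('v)} \<Longrightarrow> j \<in> {1..DIM('v)} \<Longrightarrow> E i \<bullet> E j = (if i = j then 1 else 0)"
  using tc unfolding typeC_def by blast

lemma typeC_roots_eq: "R = typeC_short \<union> typeC_long"
proof -
  have R: "R = {s *\<^sub>R E i + t *\<^sub>R E j | s t i j. s \<in> {1,-1} \<and> t \<in> {1,-1} \<and> 1 \<le> i \<and> i < j \<and> j \<le> DIM('v)}
       \<union> typeC_long" using tc unfolding typeC_def typeC_long_def by blast
  have "{s *\<^sub>R E i + t *\<^sub>R E j | s t i j. s \<in> {1,-1} \<and> t \<in> {1,-1} \<and> 1 \<le> i \<and> i < j \<and> j \<le> DIM('v)} = typeC_short"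
  proof
    show "{s *\<^sub>R E i + t *\<^sub>R E j | s t i j. s \<in> {1,-1} \<and> t \<in> {1,-1} \<and> 1 \<le> i \<and> i < j \<and> j \<le> DIM('v)} \<subseteq> typeC_short"
      unfolding typeC_short_def by fastforce
    show "typeC_short \<subseteq> {s *\<^sub>R E i + t *\<^sub>R E j | s t i j. s \<in> {1,-1} \<and> t \<in> {1,-1} \<and> 1 \<le> i \<and> i < j \<and> j \<le> DIM('v)}"
    proof
      fix x assume "x \<in> typeC_short"
      then obtain s t i j where x: "x = s *\<^sub>R E i + t *\<^sub>R E j" "s \<in> {1,-1}" "t \<in> {1,-1}" "i \<in> {1..DIM('v)}" "j \<in> {1..DIM('v)}" "i \<noteq> j"
        unfolding typeC_short_def by blast
      show "x \<in> {s *\<^sub>R E i + t *\<^sub>R E j | s t i j. s \<in> {1,-1} \<and> t \<in> {1,-1} \<and> 1 \<le> i \<and> i < j \<and> j \<le> DIM('v)}"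
      proof (cases "i < j")
        case True then show ?thesis using x by auto
      next
        case False
        with x(6) have "j < i" by simp
        moreover have "x = t *\<^sub>R E j + s *\<^sub>R E i" using x(1) by simp
        ultimately show ?thesis
          using x(2-5) by (intro CollectI exI[of _ t] exI[of _ s] exI[of _ j] exI[of _ i]) auto
      qed
    qed
  qed
  then show ?thesis using R by simp
qed

lemma sign_mult: "s \<in> {1,-1::real} \<Longrightarrow> t \<in> {1,-1} \<Longrightarrow> s * t \<in> {1,-1}"
  by auto

lemma typeC_reflection_signed_perm:
  assumes b: "b \<in> R"
  shows "\<exists>\<pi> \<epsilon>. inj_on \<pi> {1..DIM('v)} \<and> (\<forall>p\<in>{1..DIM('v)}. \<pi> p \<in> {1..DIM('v)} \<and> \<epsilon> p \<in> {1,-1::real}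
            \<and> reflection b (E p) = \<epsilon> p *\<^sub>R E (\<pi> p))"
proof -
  from b consider (P) "b \<in> typeC_short" | (L) "b \<in> typeC_long" using typeC_roots_eq by blast
  then show ?thesis
  proof cases
    case P
    then obtain s t k l where bb: "b = s *\<^sub>R E k + t *\<^sub>R E l" "s \<in> {1,-1}" "t \<in> {1,-1}" "k \<in> {1..DIM('v)}" "l \<in> {1..DIM('v)}" "k \<noteq> l"
      unfolding typeC_short_def by blast
    have bb2: "b \<bullet> b = 2" using bb
      by (auto simp: inner_add_left inner_add_right typeC_orthonormal)
    have cor: "coroot b = b" by (simp add: coroot_def bb2)
    define \<pi> where "\<pi> p = (if p = k then l else if p = l then k else p)" for p
    define \<epsilon> where "\<epsilon> p = (if p = k \<or> p = l then - s * t else 1)" for p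
    have "inj_on \<pi> {1..DIM('v)}" unfolding inj_on_def \<pi>_def by auto
    moreover have "\<pi> p \<in> {1..DIM('v)} \<and> \<epsilon> p \<in> {1,-1::real} \<and> reflection b (E p) = \<epsilon> p *\<^sub>R E (\<pi> p)" if p: "p \<in> {1..DIM('v)}" for p
    proof -
      have ip: "E p \<bullet> b = s * (if p = k then 1 else 0) + t * (if p = l then 1 else 0)"
        using bb p by (simp add: inner_add_right typeC_orthonormal)
      have "reflection b (E p) = E p - (E p \<bullet> b) *\<^sub>R b" by (simp add: reflection_formula cor)
      also have "\<dots> = \<epsilon> p *\<^sub>R E (\<pi> p)"
        using bb(2,3,6) unfolding ip unfolding \<pi>_def \<epsilon>_def bb(1)
        by (auto simp: algebra_simps)
      finally show ?thesis using bb p sign_mult[OF bb(2,3)] by (auto simp: \<pi>_def \<epsilon>_def)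
    qed
    ultimately show ?thesis by blast
  next
    case L
    then obtain s m where bb: "b = (2 * s) *\<^sub>R E m" "s \<in> {1,-1}" "m \<in> {1..DIM('v)}"
      unfolding typeC_long_def by blast
    have Em: "E m \<bullet> E m = 1" using typeC_orthonormal[OF bb(3) bb(3)] by simp
    have bb4: "b \<bullet> b = 4" using bb by (auto simp: Em)
    have cor: "coroot b = s *\<^sub>R E m" using bb by (auto simp: coroot_def bb4 Em)
    define \<epsilon> where "\<epsilon> p = (if p = m then -1 else 1::real)" for p
    have "inj_on id {1..DIM('v)}" by simp
    moreover have "id p \<in> {1..DIM('v)} \<and> \<epsilon> p \<in> {1,-1::real} \<and> reflection b (E p) = \<epsilon> p *\<^sub>R E (id p)" if p: "p \<in> {1..DIM('v)}" for p
    proof -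
      have ip: "E p \<bullet> coroot b = s * (if p = m then 1 else 0)"
        unfolding cor using bb(3) p by (simp add: typeC_orthonormal)
      have "reflection b (E p) = E p - (E p \<bullet> coroot b) *\<^sub>R b" by (simp add: reflection_formula)
      also have "\<dots> = \<epsilon> p *\<^sub>R E p"
        using bb(2) unfolding ip unfolding \<epsilon>_def bb(1) by (auto simp: algebra_simps scaleR_2)
      finally show ?thesis using p by (auto simp: \<epsilon>_def)
    qed
    ultimately show ?thesis by blast
  qed
qed

lemma typeC_reflection_closed: "b \<in> R \<Longrightarrow> x \<in> R \<Longrightarrow> reflection b x \<in> R"
proof -
  assume b: "b \<in> R" and x: "x \<in> R"
  obtain \<pi> \<epsilon> where inj: "inj_on \<pi> {1..DIM('v)}" and pe: "\<And>p. p \<in> {1..DIM('v)} \<Longrightarrow> \<pi> p \<in> {1..DIM('v)} \<and> \<epsilon> p \<in> {1,-1::real}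
            \<and> reflection b (E p) = \<epsilon> p *\<^sub>R E (\<pi> p)"
    using typeC_reflection_signed_perm[OF b] by blast
  from x consider (P) "x \<in> typeC_short" | (L) "x \<in> typeC_long" using typeC_roots_eq by blast
  then show ?thesis
  proof cases
    case P
    then obtain s t i j where xx: "x = s *\<^sub>R E i + t *\<^sub>R E j" "s \<in> {1,-1}" "t \<in> {1,-1}" "i \<in> {1..DIM('v)}" "j \<in> {1..DIM('v)}" "i \<noteq> j"
      unfolding typeC_short_def by blast
    have "reflection b x = (s * \<epsilon> i) *\<^sub>R E (\<pi> i) + (t * \<epsilon> j) *\<^sub>R E (\<pi> j)"
      using pe[OF xx(4)] pe[OF xx(5)] by (simp add: xx(1) reflection_add reflection_scale)
    moreover have "\<pi> i \<noteq> \<pi> j" using inj xx(4,5,6) by (auto dest: inj_onD)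
    ultimately have "reflection b x \<in> typeC_short"
      unfolding typeC_short_def using pe[OF xx(4)] pe[OF xx(5)] sign_mult xx(2,3) by blast
    then show ?thesis using typeC_roots_eq by blast
  next
    case L
    then obtain s m where xx: "x = (2 * s) *\<^sub>R E m" "s \<in> {1,-1}" "m \<in> {1..DIM('v)}"
      unfolding typeC_long_def by blast
    have "reflection b x = (2 * (s * \<epsilon> m)) *\<^sub>R E (\<pi> m)"
      using pe[OF xx(3)] by (simp add: xx(1) reflection_scale)
    then have "reflection b x \<in> typeC_long"
      unfolding typeC_long_def using pe[OF xx(3)] sign_mult xx(2) by blast
    then show ?thesis using typeC_roots_eq by blast
  qed
qed

lemma typeC_inner_basis_int: "x \<in> R \<Longrightarrow> p \<in> {1..DIM('v)} \<Longrightarrow> x \<bullet> E p \<in> \<int>"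
proof -
  assume x: "x \<in> R" and p: "p \<in> {1..DIM('v)}"
  from x consider (P) "x \<in> typeC_short" | (L) "x \<in> typeC_long" using typeC_roots_eq by blast
  then show ?thesis
  proof cases
    case P
    then obtain s t i j where xx: "x = s *\<^sub>R E i + t *\<^sub>R E j" "s \<in> {1,-1}" "t \<in> {1,-1}" "i \<in> {1..DIM('v)}" "j \<in> {1..DIM('v)}"
      unfolding typeC_short_def by blast
    have "x \<bullet> E p = s * (if i = p then 1 else 0) + t * (if j = p then 1 else 0)"
      using xx p by (simp add: inner_add_left typeC_orthonormal)
    then show ?thesis using xx(2,3) by auto
  next
    case L
    then obtain s m where xx: "x = (2 * s) *\<^sub>R E m" "s \<in> {1,-1}" "m \<in> {1..DIM('v)}"
      unfolding typeC_long_def by blast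
    have "x \<bullet> E p = 2 * s * (if m = p then 1 else 0)"
      using xx p by (simp add: typeC_orthonormal)
    then show ?thesis using xx(2) by auto
  qed
qed

lemma typeC_crystallographic: "b \<in> R \<Longrightarrow> x \<in> R \<Longrightarrow> x \<bullet> coroot b \<in> \<int>"
proof -
  assume b: "b \<in> R" and x: "x \<in> R"
  from b consider (P) "b \<in> typeC_short" | (L) "b \<in> typeC_long" using typeC_roots_eq by blast
  then show ?thesis
  proof cases
    case P
    then obtain s t k l where bb: "b = s *\<^sub>R E k + t *\<^sub>R E l" "s \<in> {1,-1}" "t \<in> {1,-1}" "k \<in> {1..DIM('v)}" "l \<in> {1..DIM('v)}" "k \<noteq> l"
      unfolding typeC_short_def by blast
    have bb2: "b \<bullet> b = 2" using bb
      by (auto simp: inner_add_left inner_add_right typeC_orthonormal)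
    have cb: "coroot b = b" by (simp add: coroot_def bb2)
    have "x \<bullet> coroot b = s * (x \<bullet> E k) + t * (x \<bullet> E l)"
      unfolding cb by (simp add: bb(1) inner_add_right)
    then show ?thesis using bb(2,3) typeC_inner_basis_int[OF x bb(4)] typeC_inner_basis_int[OF x bb(5)]
      by (auto intro: Ints_add Ints_mult)
  next
    case L
    then obtain s m where bb: "b = (2 * s) *\<^sub>R E m" "s \<in> {1,-1}" "m \<in> {1..DIM('v)}"
      unfolding typeC_long_def by blast
    have Em: "E m \<bullet> E m = 1" using typeC_orthonormal[OF bb(3) bb(3)] by simp
    have bb4: "b \<bullet> b = 4" using bb by (auto simp: Em)
    have "x \<bullet> coroot b = s * (x \<bullet> E m)"
      using bb by (auto simp: coroot_def bb4 Em)
    then show ?thesis using bb(2) typeC_inner_basis_int[OF x bb(3)] by (auto intro: Ints_mult)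
  qed
qed

lemma typeC_finite: "finite R"
proof -
  have "typeC_short \<subseteq> (\<lambda>(s,t,i,j). s *\<^sub>R E i + t *\<^sub>R E j) ` ({1,-1} \<times> {1,-1} \<times> {1..DIM('v)} \<times> {1..DIM('v)})"
  proof
    fix x assume "x \<in> typeC_short"
    then obtain s t i j where xx: "x = s *\<^sub>R E i + t *\<^sub>R E j" "s \<in> {1,-1}" "t \<in> {1,-1}" "i \<in> {1..DIM('v)}" "j \<in> {1..DIM('v)}"
      unfolding typeC_short_def by blast
    show "x \<in> (\<lambda>(s,t,i,j). s *\<^sub>R E i + t *\<^sub>R E j) ` ({1,-1} \<times> {1,-1} \<times> {1..DIM('v)} \<times> {1..DIM('v)})"
      by (rule image_eqI[where x="(s,t,i,j)"]) (use xx in simp_all)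
  qed
  moreover have "typeC_long \<subseteq> (\<lambda>(s,m). (2 * s) *\<^sub>R E m) ` ({1,-1} \<times> {1..DIM('v)})"
  proof
    fix x assume "x \<in> typeC_long"
    then obtain s m where xx: "x = (2 * s) *\<^sub>R E m" "s \<in> {1,-1}" "m \<in> {1..DIM('v)}"
      unfolding typeC_long_def by blast
    show "x \<in> (\<lambda>(s,m). (2 * s) *\<^sub>R E m) ` ({1,-1} \<times> {1..DIM('v)})"
      by (rule image_eqI[where x="(s,m)"]) (use xx in simp_all)
  qed
  ultimately have "finite typeC_short" "finite typeC_long" by (auto intro: finite_subset)
  then show ?thesis unfolding typeC_roots_eq by simp
qed

lemma typeC_nonzero: "0 \<notin> R"
proof
  assume "0 \<in> R"
  then consider (P) "(0::'v) \<in> typeC_short" | (L) "(0::'v) \<in> typeC_long" using typeC_roots_eq by blast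
  then show False
  proof cases
    case P
    then obtain s t i j where xx: "0 = s *\<^sub>R E i + t *\<^sub>R E j" "s \<in> {1,-1}" "t \<in> {1,-1}" "i \<in> {1..DIM('v)}" "j \<in> {1..DIM('v)}" "i \<noteq> j"
      unfolding typeC_short_def by blast
    have "(s *\<^sub>R E i + t *\<^sub>R E j) \<bullet> E i = s" using xx(4,5,6) by (simp add: inner_add_left typeC_orthonormal)
    then have "(0::'v) \<bullet> E i = s" by (simp only: xx(1)[symmetric])
    then show False using xx(2) by auto
  next
    case L
    then obtain s m where xx: "0 = (2 * s) *\<^sub>R E m" "s \<in> {1,-1}" "m \<in> {1..DIM('v)}"
      unfolding typeC_long_def by blast
    have "((2 * s) *\<^sub>R E m) \<bullet> E m = 2 * s" using xx(3) by (simp add: typeC_orthonormal)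
    then have "(0::'v) \<bullet> E m = 2 * s" by (simp only: xx(1)[symmetric])
    then show False using xx(2) by auto
  qed
qed

lemma typeC_span: "span R = UNIV"
proof -
  have Espan: "E p \<in> span R" if p: "p \<in> {1..DIM('v)}" for p
  proof -
    have "(2 * 1) *\<^sub>R E p \<in> R" using p unfolding typeC_roots_eq typeC_long_def by blast
    then have "(1/2) *\<^sub>R ((2 * 1) *\<^sub>R E p) \<in> span R" by (intro span_mul span_base)
    then show ?thesis by simp
  qed
  have injE: "inj_on E {1..DIM('v)}"
  proof (rule inj_onI)
    fix i j assume "i \<in> {1..DIM('v)}" "j \<in> {1..DIM('v)}" "E i = E j"
    then have "E i \<bullet> E j = 1" using typeC_orthonormal[of i i] by simp
    then show "i = j" using typeC_orthonormal[OF \<open>i \<in> {1..DIM('v)}\<close> \<open>j \<in> {1..DIM('v)}\<close>] by (simp split: if_splits)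
  qed
  have po: "pairwise orthogonal (E ` {1..DIM('v)})"
    unfolding pairwise_def orthogonal_def using typeC_orthonormal by fastforce
  have n0: "0 \<notin> E ` {1..DIM('v)}"
  proof
    assume "0 \<in> E ` {1..DIM('v)}"
    then obtain i where "i \<in> {1..DIM('v)}" "E i = 0" by auto
    then show False using typeC_orthonormal[of i i] by simp
  qed
  have ind: "independent (E ` {1..DIM('v)})" by (rule pairwise_orthogonal_independent[OF po n0])
  have "card (E ` {1..DIM('v)}) = DIM('v)" using card_image[OF injE] by simp
  then have "UNIV \<subseteq> span (E ` {1..DIM('v)})"
    using card_ge_dim_independent[OF subset_UNIV ind] by (simp add: dim_UNIV)
  also have "span (E ` {1..DIM('v)}) \<subseteq> span R" using Espan by (intro span_minimal) auto
  finally show ?thesis by blast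
qed

lemma typeC_root_system: "root_system R"
  unfolding root_system_def
proof (intro conjI ballI)
  show "finite R" by (rule typeC_finite)
  show "0 \<notin> R" by (rule typeC_nonzero)
  show "span R = UNIV" by (rule typeC_span)
  fix a assume a: "a \<in> R"
  show "reflection a ` R = R"
  proof
    show "reflection a ` R \<subseteq> R" using typeC_reflection_closed[OF a] by blast
    show "R \<subseteq> reflection a ` R"
    proof
      fix x assume "x \<in> R"
      then have "reflection a x \<in> R" by (rule typeC_reflection_closed[OF a])
      moreover have "x = reflection a (reflection a x)" by simp
      ultimately show "x \<in> reflection a ` R" by blast
    qed
  qed
  fix b assume "b \<in> R"
  then show "b \<bullet> coroot a \<in> \<int>" by (rule typeC_crystallographic[OF a])
qed

end

lemma setting_root_system: "setting cs R eps \<Longrightarrow> root_system R"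
  unfolding setting_def using typeC_root_system by (cases cs) auto

section \<open>The affine Weyl group and the smash product\<close>

lemma W0_image_coroots:
  assumes rs: "root_system R" and w: "w \<in> weyl_group R"
  shows "w ` (coroot ` R) = coroot ` R"
proof -
  have stab: "\<forall>a\<in>R. reflection a ` R = R" using rs unfolding root_system_def by blast
  have "w ` (coroot ` R) = coroot ` (w ` R)"
    using W0_coroot[OF w] by (auto simp: image_iff)
  also have "\<dots> = coroot ` R" using W0_image_roots[OF stab w] by simp
  finally show ?thesis .
qed

lemma weight_lattice_W0_closed:
  assumes w: "w \<in> weyl_group R" and X: "w ` X = X"
    and l: "l \<in> weight_lattice X"
  shows "w l \<in> weight_lattice X"
  unfolding weight_lattice_def
proof (rule CollectI, rule ballI)
  fix a assume a: "a \<in> X"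
  then obtain b where b: "b \<in> X" "a = w b" using X by blast
  have "w l \<bullet> coroot a = w l \<bullet> w (coroot b)" by (simp add: b W0_coroot[OF w])
  also have "\<dots> = l \<bullet> coroot b" by (rule W0_inner[OF w])
  finally show "w l \<bullet> coroot a \<in> \<int>" using l b unfolding weight_lattice_def by simp
qed

lemma root_lattice_W0_closed:
  assumes w: "w \<in> weyl_group R" and X: "w ` X = X"
    and l: "l \<in> root_lattice X"
  shows "w l \<in> root_lattice X"
proof -
  from l obtain c :: "'a \<Rightarrow> int" where lc: "l = (\<Sum>a\<in>X. of_int (c a) *\<^sub>R a)"
    unfolding root_lattice_def by blast
  have inj: "inj_on w X" using W0_inj[OF w] by (simp add: inj_on_def inj_def)
  have "w l = (\<Sum>a\<in>X. of_int (c a) *\<^sub>R w a)"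
    unfolding lc by (simp add: linear_sum[OF W0_linear[OF w]] linear_scale[OF W0_linear[OF w]] o_def)
  also have "\<dots> = (\<Sum>a\<in>X. of_int (c (inv w (w a))) *\<^sub>R w a)"
    by (simp add: W0_inv_l[OF w])
  also have "\<dots> = (\<Sum>b\<in>w ` X. of_int (c (inv w b)) *\<^sub>R b)"
    by (rule sum.reindex[OF inj, symmetric, unfolded o_def])
  also have "\<dots> = (\<Sum>b\<in>X. of_int ((c \<circ> inv w) b) *\<^sub>R b)" using X by simp
  finally show ?thesis unfolding root_lattice_def by blast
qed

lemma latL'_W0_closed:
  assumes rs: "root_system R" and w: "w \<in> weyl_group R" and l: "l \<in> latL' cs R"
  shows "w l \<in> latL' cs R"
  using l W0_image_coroots[OF rs w]
  by (cases cs) (auto simp: latL'_def intro: weight_lattice_W0_closed[OF w] root_lattice_W0_closed[OF w])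

lemma WgrpE:
  assumes "g \<in> Wgrp cs R"
  obtains v l where "v \<in> weyl_group R" "l \<in> latL' cs R" "g = (\<lambda>x. v (x + l))"
  using assms unfolding Wgrp_def affine_weyl_def by blast

lemma aff_isometry_affine_weyl: "v \<in> weyl_group R \<Longrightarrow> aff_isometry (\<lambda>x. v (x + l))"
proof -
  assume v: "v \<in> weyl_group R"
  have "(\<lambda>x. v (x + l)) = v \<circ> (\<lambda>x. x + l)" by (simp add: o_def)
  then show ?thesis using aff_isometry_comp[OF W0_aff_isometry[OF v] aff_isometry_translation] by simp
qed

lemma Ralg_QL:
  fixes X :: "'v::euclidean_space set"
  shows "x \<in> Ralg X \<Longrightarrow> x \<in> QL (UNIV::'v set)"
  by (induction rule: Ralg.induct) (auto intro: QL_cQ QL_add QL_mult QL_inverse QL_diff QL_one QL_zmon)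

lemma Ralg_sum: "(\<And>i. i \<in> I \<Longrightarrow> f i \<in> Ralg X) \<Longrightarrow> sum f I \<in> Ralg X"
proof (induction I rule: infinite_finite_induct)
  case (infinite A) then show ?case using Ralg.const[of 0 X] by simp
next
  case empty then show ?case using Ralg.const[of 0 X] by simp
next
  case (insert x F) then show ?case by (simp add: Ralg.add)
qed

lemma DRW_wf_dop: "D \<in> DRW cs R \<Longrightarrow> wf_dop D"
proof -
  assume "D \<in> DRW cs R"
  then have f: "finite (dsupp D)" and s: "dsupp D \<subseteq> Wgrp cs R" and v: "\<forall>g. D g \<in> Ralg (gradroots cs R)"
    unfolding DRW_def by auto
  have "aff_isometry g" if "g \<in> dsupp D" for g
  proof -
    have "g \<in> Wgrp cs R" using s that by blast
    then obtain v l where "v \<in> weyl_group R" "g = (\<lambda>x. v (x + l))" by (rule WgrpE)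
    then show ?thesis using aff_isometry_affine_weyl by blast
  qed
  then show ?thesis unfolding wf_dop_def using f v Ralg_QL by blast
qed

definition linear_parts_in_W0 :: "'v::euclidean_space set \<Rightarrow> 'v dop \<Rightarrow> bool" where
  "linear_parts_in_W0 R D \<longleftrightarrow> (\<forall>g\<in>dsupp D. \<exists>v\<in>weyl_group R. \<forall>x. g x = v x + g 0)"

lemma DRW_linear_parts_in_W0: "D \<in> DRW cs R \<Longrightarrow> linear_parts_in_W0 R D"
  unfolding linear_parts_in_W0_def
proof (intro ballI)
  fix g assume "D \<in> DRW cs R" "g \<in> dsupp D"
  then have "g \<in> Wgrp cs R" unfolding DRW_def by blast
  then obtain v l where v: "v \<in> weyl_group R" "g = (\<lambda>x. v (x + l))" by (rule WgrpE)
  have "\<forall>x. g x = v x + g 0" using v by (simp add: W0_add[OF v(1)] W0_zero[OF v(1)])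
  then show "\<exists>v\<in>weyl_group R. \<forall>x. g x = v x + g 0" using v(1) by blast
qed

lemma linear_parts_in_W0_dmult: "linear_parts_in_W0 R D \<Longrightarrow> linear_parts_in_W0 R E \<Longrightarrow> linear_parts_in_W0 R (dmult q D E)"
  unfolding linear_parts_in_W0_def
proof (intro ballI)
  fix g assume D: "\<forall>g\<in>dsupp D. \<exists>v\<in>weyl_group R. \<forall>x. g x = v x + g 0"
    and E: "\<forall>g\<in>dsupp E. \<exists>v\<in>weyl_group R. \<forall>x. g x = v x + g 0"
    and g: "g \<in> dsupp (dmult q D E)"
  then obtain g1 g2 where g12: "g1 \<in> dsupp D" "g2 \<in> dsupp E" "g = g1 \<circ> g2"
    using dsupp_dmult[of q D E] by auto
  obtain v1 where v1: "v1 \<in> weyl_group R" "\<forall>x. g1 x = v1 x + g1 0" using D g12 by blast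
  obtain v2 where v2: "v2 \<in> weyl_group R" "\<forall>x. g2 x = v2 x + g2 0" using E g12 by blast
  have e1: "\<And>y. g1 y = v1 y + g1 0" using v1(2) by blast
  have e2: "\<And>y. g2 y = v2 y + g2 0" using v2(2) by blast
  have "g x = (v1 \<circ> v2) x + g 0" for x
  proof -
    have "g x = v1 (g2 x) + g1 0" using e1[of "g2 x"] by (simp add: g12(3))
    also have "\<dots> = v1 (v2 x) + (v1 (g2 0) + g1 0)" using e2[of x] by (simp add: W0_add[OF v1(1)])
    also have "v1 (g2 0) + g1 0 = g 0" using e1[of "g2 0"] by (simp add: g12(3))
    finally show ?thesis by simp
  qed
  then have "\<forall>x. g x = (v1 \<circ> v2) x + g 0" by blast
  then show "\<exists>v\<in>weyl_group R. \<forall>x. g x = v x + g 0" using W0_comp[OF v1(1) v2(1)] by blast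
qed

section \<open>The map beta\<close>

definition is_translation :: "('v::euclidean_space \<Rightarrow> 'v) \<Rightarrow> bool" where
  "is_translation h \<longleftrightarrow> (\<forall>x. h x = x + h 0)"

lemma is_translation_eq: assumes "is_translation h" shows "h = (\<lambda>x. x + h 0)"
proof (rule ext)
  fix x show "h x = x + h 0" using assms unfolding is_translation_def by blast
qed

lemma is_translation_comp: "is_translation a \<Longrightarrow> is_translation b \<Longrightarrow> is_translation (a \<circ> b)"
  unfolding is_translation_def by (metis add.assoc add_0 comp_apply)

lemma is_translation_eq_iff:
  assumes "is_translation g" and "is_translation h"
  shows "g = h \<longleftrightarrow> g 0 = h 0"
proof
  assume e: "g 0 = h 0"
  show "g = h"
  proof
    fix x
    have "g x = x + g 0" "h x = x + h 0" using assms unfolding is_translation_def by blast+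
    then show "g x = h x" using e by simp
  qed
qed simp

lemma translation_aff_isometry: assumes "is_translation h" shows "aff_isometry h"
proof -
  have e: "h = (\<lambda>x. x + h 0)" by (rule is_translation_eq[OF assms])
  show ?thesis by (subst e) (rule aff_isometry_translation)
qed

lemma dbeta_alt: "dbeta D h = (if is_translation h then (\<Sum>g\<in>{g\<in>dsupp D. g 0 = h 0}. D g) else 0)"
  by (simp only: dbeta_def is_translation_def)

lemma dbeta_superset:
  assumes "finite S" "dsupp D \<subseteq> S"
  shows "dbeta D h = (if is_translation h then (\<Sum>g\<in>{g\<in>S. g 0 = h 0}. D g) else 0)"
proof (cases "is_translation h")
  case True
  have "(\<Sum>g\<in>{g\<in>dsupp D. g 0 = h 0}. D g) = (\<Sum>g\<in>{g\<in>S. g 0 = h 0}. D g)"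
    by (rule sum.mono_neutral_left) (use assms in \<open>auto simp: dsupp_iff\<close>)
  then show ?thesis using True by (simp only: dbeta_alt if_True)
next
  case False
  then show ?thesis by (simp only: dbeta_alt if_False)
qed

lemma dsupp_dbeta_is_translation: "h \<in> dsupp (dbeta D) \<Longrightarrow> is_translation h"
proof (rule ccontr)
  assume h: "h \<in> dsupp (dbeta D)" and n: "\<not> is_translation h"
  have "dbeta D h = 0" using n by (simp only: dbeta_alt if_False)
  then show False using h by (simp add: dsupp_iff)
qed

lemma dsupp_dbeta: "dsupp (dbeta D) \<subseteq> (\<lambda>g x. x + g 0) ` dsupp D"
proof
  fix h assume h: "h \<in> dsupp (dbeta D)"
  then have nz: "dbeta D h \<noteq> 0" by (simp add: dsupp_iff)
  have tr: "is_translation h" by (rule dsupp_dbeta_is_translation[OF h])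
  have "{g\<in>dsupp D. g 0 = h 0} \<noteq> {}"
  proof
    assume e: "{g\<in>dsupp D. g 0 = h 0} = {}"
    have "dbeta D h = 0" unfolding dbeta_alt e by simp
    with nz show False by simp
  qed
  then obtain g where g: "g \<in> dsupp D" "g 0 = h 0" by blast
  have "h = (\<lambda>x. x + g 0)" using is_translation_eq[OF tr] g(2) by simp
  then show "h \<in> (\<lambda>g x. x + g 0) ` dsupp D" using g(1) by (rule image_eqI)
qed

lemma wf_dop_dbeta: "wf_dop D \<Longrightarrow> wf_dop (dbeta (D::'v::euclidean_space dop))"
  unfolding wf_dop_def
proof (intro conjI ballI allI; elim conjE)
  assume f: "finite (dsupp D)" and vals: "\<forall>g. D g \<in> QL (UNIV::'v set)"
  show "finite (dsupp (dbeta D))" by (rule finite_subset[OF dsupp_dbeta]) (simp add: f)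
  show "aff_isometry g" if "g \<in> dsupp (dbeta D)" for g
    using is_translation_eq[OF dsupp_dbeta_is_translation[OF that]] aff_isometry_translation by metis
  show "dbeta D h \<in> QL (UNIV::'v set)" for h
    unfolding dbeta_alt using vals by (auto intro!: QL_sum QL_zero)
qed

lemma dbeta_dterm_translation:
  assumes t: "is_translation t"
  shows "dbeta (dterm f t) = dterm f t"
proof
  fix h
  have s: "dsupp (dterm f t) = (if f = 0 then {} else {t})" by (auto simp: dsupp_def dterm_def)
  show "dbeta (dterm f t) h = dterm f t h"
  proof (cases "is_translation h")
    case True
    have "dbeta (dterm f t) h = (\<Sum>g\<in>{g \<in> dsupp (dterm f t). g 0 = h 0}. dterm f t g)"
      using True by (simp only: dbeta_alt if_True)
    also have "\<dots> = (if t 0 = h 0 then f else 0)"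
    proof (cases "f = 0")
      case False
      then have "{g \<in> dsupp (dterm f t). g 0 = h 0} = (if t 0 = h 0 then {t} else {})"
        by (auto simp: s)
      then show ?thesis by (simp add: dterm_def)
    qed (simp add: dterm_def dsupp_def)
    finally show ?thesis using is_translation_eq_iff[OF True t] by (simp add: dterm_def)
  next
    case False
    then have "h \<noteq> t" using t by blast
    then show ?thesis using False by (simp add: dbeta_alt dterm_def)
  qed
qed

lemma dbeta_dunit: "dbeta (dunit :: 'v::euclidean_space dop) = dunit"
  unfolding dunit_def by (rule dbeta_dterm_translation) (simp add: is_translation_def)

lemma dbeta_dadd:
  assumes "finite (dsupp D)" and "finite (dsupp E)"
  shows "dbeta (dadd D E) = dadd (dbeta D) (dbeta E)"
proof
  fix h
  have fS: "finite (dsupp D \<union> dsupp E)" using assms by simp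
  show "dbeta (dadd D E) h = dadd (dbeta D) (dbeta E) h"
    unfolding dadd_def[of "dbeta D"] dbeta_superset[OF fS dsupp_dadd]
      dbeta_superset[OF fS Un_upper1] dbeta_superset[OF fS Un_upper2]
    by (simp add: dadd_def sum.distrib)
qed

lemma dbeta_dscal:
  assumes "finite (dsupp D)"
  shows "dbeta (dscal c D) = dscal c (dbeta D)"
proof
  fix h
  show "dbeta (dscal c D) h = dscal c (dbeta D) h"
    unfolding dscal_def[of c "dbeta D"] dbeta_superset[OF assms dsupp_dscal]
      dbeta_superset[OF assms order_refl]
    by (simp add: dscal_def sum_distrib_left)
qed

lemma dbeta_DRL:
  assumes rs: "root_system R" and D: "D \<in> DRW cs R"
  shows "dbeta D \<in> DRL cs R"
proof -
  have "h \<in> Wgrp cs R" if h: "h \<in> dsupp (dbeta D)" for h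
  proof -
    obtain g where g: "g \<in> dsupp D" "h = (\<lambda>x. x + g 0)" using dsupp_dbeta h by blast
    have "g \<in> Wgrp cs R" using D g(1) unfolding DRW_def by blast
    then obtain v l where vl: "v \<in> weyl_group R" "l \<in> latL' cs R" "g = (\<lambda>x. v (x + l))"
      by (rule WgrpE)
    have "v l \<in> latL' cs R" by (rule latL'_W0_closed[OF rs vl(1,2)])
    moreover have "h = (\<lambda>x. id (x + v l))" using g(2) vl(3) by simp
    ultimately show "h \<in> Wgrp cs R" unfolding Wgrp_def affine_weyl_def using W0_id by blast
  qed
  moreover have "dbeta D h \<in> Ralg (gradroots cs R)" for h
    using D Ralg.const[of 0 "gradroots cs R"] unfolding DRW_def dbeta_alt by (auto intro!: Ralg_sum)
  moreover have "finite (dsupp (dbeta D))"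
    using wf_dopD(1)[OF wf_dop_dbeta[OF DRW_wf_dop[OF D]]] .
  ultimately show ?thesis
    using dsupp_dbeta_is_translation unfolding DRL_def DRW_def is_translation_def by blast
qed

lemma dsupp_conj:
  "dsupp (dmult q (dmult q (dterm 1 w) D) (dterm 1 v)) \<subseteq> (\<lambda>t. w \<circ> t \<circ> v) ` dsupp D"
  using dsupp_dmult[of q "dmult q (dterm 1 w) D" "dterm 1 v"] dsupp_dmult[of q "dterm 1 w" D]
  by (force simp: dsupp_dterm)

lemma is_translation_conj_W0:
  assumes w: "w \<in> weyl_group R" and t: "is_translation t"
  shows "is_translation (w \<circ> t \<circ> inv w)"
proof -
  have tx: "t y = y + t 0" for y using t unfolding is_translation_def by blast
  have "w (t (inv w x)) = x + w (t 0)" for x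
    by (subst tx) (simp add: W0_add[OF w] W0_inv_r[OF w])
  then show ?thesis unfolding is_translation_def by simp
qed

lemma dsupp_dmult_translations:
  assumes "\<forall>h\<in>dsupp D. is_translation h" and "\<forall>h\<in>dsupp E. is_translation h"
  shows "\<forall>h\<in>dsupp (dmult q D E). is_translation h"
  using assms dsupp_dmult[of q D E] is_translation_comp by fastforce

definition W0_invariant :: "real \<Rightarrow> 'v::euclidean_space set \<Rightarrow> qfield \<Rightarrow> bool" where
  "W0_invariant q R f \<longleftrightarrow> f \<in> QL (UNIV::'v set) \<and> (\<forall>w\<in>weyl_group R. actQ q w f = f)"

lemma translation_comp_linear_part: assumes h: "\<forall>x. g x = v x + g 0" shows "g = (\<lambda>x. x + g 0) \<circ> v"
proof (rule ext)
  fix x show "g x = ((\<lambda>x. x + g 0) \<circ> v) x" using spec[OF h, of x] by (simp only: o_apply)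
qed

lemma dapply_dbeta_W0_invariant:
  fixes D :: "'v::euclidean_space dop"
  assumes q: "0 < q" and D: "wf_dop D" and ts: "linear_parts_in_W0 R D" and f: "W0_invariant q R f"
  shows "dapply q D f = dapply q (dbeta D) f"
proof -
  have fQ: "f \<in> QL (UNIV::'v set)" using f unfolding W0_invariant_def by blast
  let ?t = "\<lambda>g::'v\<Rightarrow>'v. (\<lambda>x. x + g 0)"
  let ?T = "?t ` dsupp D"
  have fT: "finite ?T" using wf_dopD(1)[OF D] by simp
  have "dapply q D f = (\<Sum>g\<in>dsupp D. D g * actQ q (?t g) f)"
    unfolding dapply_def
  proof (rule sum.cong[OF refl])
    fix g assume g: "g \<in> dsupp D"
    then obtain v where v: "v \<in> weyl_group R" "\<forall>x. g x = v x + g 0" using ts unfolding linear_parts_in_W0_def by blast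
    have "actQ q g f = actQ q (?t g \<circ> v) f"
      by (rule arg_cong[where f="\<lambda>h. actQ q h f", OF translation_comp_linear_part[OF v(2)]])
    also have "\<dots> = actQ q (?t g) (actQ q v f)"
      by (rule actQ_comp[OF q aff_isometry_translation W0_aff_isometry[OF v(1)] fQ])
    also have "actQ q v f = f" using f v(1) unfolding W0_invariant_def by blast
    finally show "D g * actQ q g f = D g * actQ q (?t g) f" by simp
  qed
  also have "\<dots> = (\<Sum>h\<in>?T. \<Sum>g\<in>{g\<in>dsupp D. ?t g = h}. D g * actQ q (?t g) f)"
    by (rule sum.image_gen[OF wf_dopD(1)[OF D]])
  also have "\<dots> = (\<Sum>h\<in>?T. dbeta D h * actQ q h f)"
  proof (rule sum.cong[OF refl])
    fix h assume h: "h \<in> ?T"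
    then obtain g0 where g0: "g0 \<in> dsupp D" "h = ?t g0" by blast
    have tr: "is_translation h" unfolding is_translation_def g0(2) by simp
    have e: "{g\<in>dsupp D. ?t g = h} = {g\<in>dsupp D. g 0 = h 0}"
    proof -
      have "?t g = h \<longleftrightarrow> g 0 = h 0" for g
      proof
        assume "?t g = h" then show "g 0 = h 0" by (metis add_0)
      next
        assume "g 0 = h 0" then show "?t g = h" using is_translation_eq[OF tr] by simp
      qed
      then show ?thesis by blast
    qed
    have "(\<Sum>g\<in>{g\<in>dsupp D. ?t g = h}. D g * actQ q (?t g) f) = (\<Sum>g\<in>{g\<in>dsupp D. ?t g = h}. D g * actQ q h f)"
      by (rule sum.cong) auto
    also have "\<dots> = (\<Sum>g\<in>{g\<in>dsupp D. g 0 = h 0}. D g) * actQ q h f"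
      unfolding e by (simp add: sum_distrib_right)
    also have "\<dots> = dbeta D h * actQ q h f" using tr by (simp only: dbeta_alt if_True)
    finally show "(\<Sum>g\<in>{g\<in>dsupp D. ?t g = h}. D g * actQ q (?t g) f) = dbeta D h * actQ q h f" .
  qed
  also have "\<dots> = dapply q (dbeta D) f"
    by (rule dapply_superset[OF fT dsupp_dbeta, symmetric])
  finally show ?thesis .
qed

section \<open>The operators T_i\<close>

lemma zaff_Pair_0: "0 < q \<Longrightarrow> zaff q (v, 0) = zmon v"
  by (simp add: zaff_def)

lemma one_minus_cQ_zmon_nonzero:
  assumes v: "v \<noteq> (0::'v::euclidean_space)"
  shows "1 - cQ c * zmon v \<noteq> 0"
proof
  assume "1 - cQ c * zmon v = 0"
  then have e: "cQ c * zmon v = 1" by simp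
  have "Fract (Poly_Mapping.single (emb v) c) 1 = cQ c * zmon v" by (simp add: cQ_def zmon_def mult_single)
  also have "\<dots> = Fract 1 1" by (simp add: e fract_collapse)
  finally have "Poly_Mapping.single (emb v) c = (1::galg)" by (rule Fract_1_inj)
  then have "(1::galg) = Poly_Mapping.single (emb v) c" by simp
  then have "Poly_Mapping.lookup (1::galg) 0 = Poly_Mapping.lookup (Poly_Mapping.single (emb v) c) 0" by simp
  moreover have "emb v \<noteq> 0" using v by simp
  ultimately show False by (simp add: lookup_single)
qed

lemma c_fun_nonzero:
  assumes q: "0 < q" and v: "v \<noteq> (0::'v::euclidean_space)" and t: "t \<noteq> 0" and t': "t' \<noteq> 0"
  shows "c_fun q t t' (v, 0) \<noteq> 0"
proof -
  have z: "zaff q (v, 0) = zmon v" by (rule zaff_Pair_0[OF q])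
  have A: "1 - cQ (t * t') * zmon v \<noteq> 0" by (rule one_minus_cQ_zmon_nonzero[OF v])
  have B: "1 + cQ (t / t') * zmon v \<noteq> 0"
    using one_minus_cQ_zmon_nonzero[OF v, of "- (t / t')"] by (simp add: cQ_uminus)
  have vv: "v + v \<noteq> 0" using v by (metis add_cancel_right_left scaleR_2 scaleR_eq_0_iff zero_neq_numeral)
  have C: "1 - (zmon v)^2 \<noteq> 0"
    using one_minus_cQ_zmon_nonzero[OF vv, of 1] by (simp add: zmon_add power2_eq_square)
  have T: "cQ t \<noteq> 0" using t cQ_inj[of t 0] by auto
  show ?thesis unfolding c_fun_def z using A B C T by simp
qed

lemma qpow_nonzero: "qpow q x \<noteq> 0"
  by (simp add: qpow_def)

lemma tau_nonzero: "tau cs eps q k a \<noteq> 0"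
  by (simp add: tau_def qpow_nonzero)

lemma tau'_nonzero: "tau' cs eps q k a \<noteq> 0"
  by (simp add: tau'_def qpow_nonzero)

lemma QL_c_fun: "c_fun q t t' (a::'v::euclidean_space \<times> real) \<in> QL (UNIV::'v set)"
  unfolding c_fun_def
  by (intro QL_divide QL_mult QL_diff QL_add QL_one QL_cQ QL_zaff QL_power)

lemma Top_wf_dop: "0 < q \<Longrightarrow> wf_dop (Top q cs eps al k i :: 'v::euclidean_space dop)"
  unfolding Top_def Let_def
  by (intro wf_dop_dadd wf_dop_dscal wf_dop_dunit wf_dop_dmult wf_dop_dterm aff_isometry_id aff_isometry_reflection QL_one QL_minus_one QL_c_fun)

lemma Top_apply:
  fixes al eps :: "nat \<Rightarrow> 'v::euclidean_space" and cs :: setting_case and i :: nat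
  assumes q: "0 < q" and f: "f \<in> QL (UNIV::'v set)"
  defines "a \<equiv> simple_aff cs al i"
  shows "dapply q (Top q cs eps al k i) f
     = cQ (tau cs eps q k a) * f
       + c_fun q (tau cs eps q k a) (tau' cs eps q k a) a * (actQ q (reflection (fst a)) f - f)"
proof -
  let ?c = "c_fun q (tau cs eps q k a) (tau' cs eps q k a) a"
  have Tdef: "Top q cs eps al k i = dadd (dscal (tau cs eps q k a) dunit)
        (dmult q (dterm ?c id) (dadd (dterm 1 (reflection (fst a))) (dterm (-1) id)))"
    unfolding Top_def Let_def a_def ..
  have f1: "wf_dop (dterm ?c (id::'v\<Rightarrow>'v))" by (intro wf_dop_dterm aff_isometry_id QL_c_fun)
  have f2: "wf_dop (dadd (dterm 1 (reflection (fst a))) (dterm (-1) (id::'v\<Rightarrow>'v)))"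
    by (intro wf_dop_dadd wf_dop_dterm aff_isometry_id aff_isometry_reflection QL_one QL_minus_one)
  have f3: "wf_dop (dscal (tau cs eps q k a) (dunit::'v dop))" by (intro wf_dop_dscal wf_dop_dunit)
  have "dapply q (Top q cs eps al k i) f
      = cQ (tau cs eps q k a) * f + ?c * actQ q (id::'v\<Rightarrow>'v) (1 * actQ q (reflection (fst a)) f + (-1) * actQ q (id::'v\<Rightarrow>'v) f)"
    unfolding Tdef
    by (simp add: dapply_dadd[OF f3 wf_dop_dmult[OF q f1 f2]] dapply_dscal[OF wf_dop_dunit]
        dapply_dunit[OF q f] dapply_mult[OF q f1 f2 f] dapply_dterm
        dapply_dadd[OF wf_dop_dterm[OF aff_isometry_reflection QL_one] wf_dop_dterm[OF aff_isometry_id QL_minus_one]]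
        actQ_id[OF q])
  also have "\<dots> = cQ (tau cs eps q k a) * f + ?c * (actQ q (reflection (fst a)) f - f)"
  proof -
    have X: "1 * actQ q (reflection (fst a)) f + (-1) * f \<in> QL (UNIV::'v set)"
      by (intro QL_add QL_mult QL_one QL_minus_one actQ_QL[OF q aff_isometry_reflection] f)
    show ?thesis using actQ_id[OF q X] by (simp add: actQ_id[OF q f])
  qed
  finally show ?thesis .
qed

lemma simple_aff_fst: "fst (simple_aff cs al i) = (if cs = CaseA then al i else coroot (al i))"
  by (simp add: simple_aff_def)

lemma simple_aff_snd: "simple_aff cs al i = (fst (simple_aff cs al i), 0)"
  by (simp add: simple_aff_def)

lemma reflection_simple_aff: "reflection (fst (simple_aff cs al i)) = reflection (al i)"
  by (simp add: simple_aff_fst reflection_coroot)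

lemma coroot_nonzero: "a \<noteq> 0 \<Longrightarrow> coroot a \<noteq> 0"
  by (simp add: coroot_def)

lemma Top_eigen_iff:
  fixes al eps :: "nat \<Rightarrow> 'v::euclidean_space"
  assumes q: "0 < q" and f: "f \<in> QL (UNIV::'v set)" and a0: "al i \<noteq> 0"
  shows "dapply q (Top q cs eps al k i) f = cQ (tau cs eps q k (simple_aff cs al i)) * f
     \<longleftrightarrow> actQ q (reflection (al i)) f = f"
proof -
  let ?a = "simple_aff cs al i"
  let ?c = "c_fun q (tau cs eps q k ?a) (tau' cs eps q k ?a) ?a"
  have "fst ?a \<noteq> 0" using a0 by (simp add: simple_aff_fst coroot_nonzero)
  then have cnz: "?c \<noteq> 0"
    using c_fun_nonzero[OF q _ tau_nonzero tau'_nonzero] simple_aff_snd[of cs al i] by metis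
  show ?thesis
    unfolding Top_apply[OF q f] reflection_simple_aff using cnz by simp
qed

lemma W0_invariant_if_simple_reflections:
  fixes R :: "'v::euclidean_space set"
  assumes q: "0 < q" and rs: "root_system R" and rb: "root_basis R al"
    and f: "f \<in> QL (UNIV::'v set)"
    and simple: "\<And>i. i \<in> {1..DIM('v)} \<Longrightarrow> actQ q (reflection (al i)) f = f"
  shows "W0_invariant q R f"
proof -
  have "aff_isometry w \<and> actQ q w f = f" if w: "w \<in> weyl_group R" for w
  proof (rule weyl_group_induct[OF rs rb _ _ _ w, where P = "\<lambda>w. aff_isometry w \<and> actQ q w f = f"])
    fix g h :: "'v \<Rightarrow> 'v"
    assume "aff_isometry g \<and> actQ q g f = f" and "aff_isometry h \<and> actQ q h f = f"
    then show "aff_isometry (g \<circ> h) \<and> actQ q (g \<circ> h) f = f"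
      by (simp add: aff_isometry_comp actQ_comp[OF q _ _ f])
  qed (simp_all add: aff_isometry_id actQ_id[OF q f] aff_isometry_reflection simple)
  then show ?thesis unfolding W0_invariant_def using f by blast
qed

lemma commutant_DRW: "D \<in> commutant q cs R eps al k \<Longrightarrow> D \<in> DRW cs R"
  by (simp add: commutant_def)

lemma commutant_preserves_W0_invariant:
  fixes R :: "'v::euclidean_space set"
  assumes q: "0 < q" and st: "setting cs R eps" and rb: "root_basis R al"
    and D: "D \<in> commutant q cs R eps al k" and f: "W0_invariant q R f"
  shows "W0_invariant q R (dapply q D f)"
proof (rule W0_invariant_if_simple_reflections[OF q setting_root_system[OF st] rb])
  have Dw: "wf_dop D" by (rule DRW_wf_dop[OF commutant_DRW[OF D]])
  have fQ: "f \<in> QL (UNIV::'v set)" using f unfolding W0_invariant_def by blast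
  show DfQ: "dapply q D f \<in> QL (UNIV::'v set)" by (rule dapply_QL[OF q Dw fQ])
  fix i assume i: "i \<in> {1..DIM('v)}"
  have aR: "al i \<in> R" using rb i unfolding root_basis_def by blast
  have a0: "al i \<noteq> 0" using root_system_nonzero[OF setting_root_system[OF st]] aR by metis
  let ?T = "Top q cs eps al k i :: 'v dop"
  let ?t = "tau cs eps q k (simple_aff cs al i)"
  have Tw: "wf_dop ?T" by (rule Top_wf_dop[OF q])
  have comm: "dmult q D ?T = dmult q ?T D" using D H0.gen[OF i] unfolding commutant_def by blast
  have "actQ q (reflection (al i)) f = f" using f W0_reflection[OF aR] unfolding W0_invariant_def by blast
  then have Tf: "dapply q ?T f = cQ ?t * f"
    using Top_eigen_iff[where al=al and i=i and cs=cs and eps=eps and k=k, OF q fQ a0] by blast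
  have "dapply q ?T (dapply q D f) = dapply q (dmult q ?T D) f"
    by (rule dapply_mult[OF q Tw Dw fQ, symmetric])
  also have "\<dots> = dapply q D (dapply q ?T f)"
    unfolding comm[symmetric] by (rule dapply_mult[OF q Dw Tw fQ])
  also have "\<dots> = cQ ?t * dapply q D f" unfolding Tf by (rule dapply_cQ[OF q Dw fQ])
  finally show "actQ q (reflection (al i)) (dapply q D f) = dapply q D f"
    using Top_eigen_iff[where al=al and i=i and cs=cs and eps=eps and k=k, OF q DfQ a0] by blast
qed

section \<open>Faithfulness on invariants\<close>

lemma vandermonde_coeffs_zero:
  fixes p u :: "'a \<Rightarrow> 'b::field"
  assumes "finite S" "inj_on u S" "\<And>m::nat. (\<Sum>s\<in>S. p s * u s ^ m) = 0"
  shows "\<forall>s\<in>S. p s = 0"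
  using assms
proof (induction S arbitrary: p rule: finite_induct)
  case empty then show ?case by simp
next
  case (insert x S)
  define p' where "p' s = p s * (u s - u x)" for s
  have injS: "inj_on u S" using insert.prems(1) by (simp add: inj_on_insert)
  have ux: "\<And>s. s \<in> S \<Longrightarrow> u s \<noteq> u x" using insert.prems(1) insert.hyps(2) by (auto simp: inj_on_def)
  have "(\<Sum>s\<in>S. p' s * u s ^ m) = 0" for m
  proof -
    have h1: "p x * u x ^ Suc m + (\<Sum>s\<in>S. p s * u s ^ Suc m) = 0"
      using insert.prems(2)[of "Suc m"] insert.hyps by simp
    have h0: "p x * u x ^ m + (\<Sum>s\<in>S. p s * u s ^ m) = 0"
      using insert.prems(2)[of m] insert.hyps by simp
    have s1: "(\<Sum>s\<in>S. p s * u s ^ Suc m) = - (p x * u x ^ Suc m)"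
      using h1 by (simp only: add_eq_0_iff)
    have s0: "(\<Sum>s\<in>S. p s * u s ^ m) = - (p x * u x ^ m)"
      using h0 by (simp only: add_eq_0_iff)
    have "(\<Sum>s\<in>S. p' s * u s ^ m) = (\<Sum>s\<in>S. p s * u s ^ Suc m) - u x * (\<Sum>s\<in>S. p s * u s ^ m)"
      by (simp add: p'_def sum_distrib_left sum_subtractf algebra_simps)
    also have "\<dots> = (- (p x * u x ^ Suc m)) - u x * (- (p x * u x ^ m))"
      unfolding s1 s0 ..
    also have "\<dots> = 0" by (simp add: algebra_simps)
    finally show ?thesis .
  qed
  then have "\<forall>s\<in>S. p' s = 0" using insert.IH[OF injS] by blast
  then have pS: "\<forall>s\<in>S. p s = 0" using ux by (auto simp: p'_def)
  have "p x + (\<Sum>s\<in>S. p s) = 0" using insert.prems(2)[of 0] insert.hyps by simp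
  then have "p x = 0" using pS by simp
  then show ?case using pS by simp
qed

lemma sum_Fract_1: "(\<Sum>i\<in>S. Fract (f i) 1) = Fract (\<Sum>i\<in>S. f i) (1::'a::idom)"
  by (induction S rule: infinite_finite_induct) (simp_all add: fract_collapse)

lemma W0_invariant_sum_zmon:
  fixes R :: "'v::euclidean_space set"
  assumes q: "0 < q" and rs: "root_system R"
  shows "W0_invariant q R (\<Sum>a\<in>R. zmon a)"
  unfolding W0_invariant_def
proof (intro conjI ballI QL_sum QL_zmon)
  fix w assume w: "w \<in> weyl_group R"
  have gw: "aff_isometry w" by (rule W0_aff_isometry[OF w])
  have "actQ q w (\<Sum>a\<in>R. zmon a) = (\<Sum>a\<in>R. zmon (w a))"
    using q by (simp add: actQ_sum[OF q gw QL_zmon] actQ_zmon[OF q gw] W0_zero[OF w])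
  also have "\<dots> = (\<Sum>b\<in>w ` R. zmon b)"
    by (rule sum.reindex[symmetric, unfolded o_def]) (use W0_inj[OF w] in \<open>simp add: inj_on_def inj_def\<close>)
  also have "\<dots> = (\<Sum>a\<in>R. zmon a)"
    unfolding W0_image_roots[OF root_system_reflection_image[OF rs] w] ..
  finally show "actQ q w (\<Sum>a\<in>R. zmon a) = (\<Sum>a\<in>R. zmon a)" .
qed

lemma actQ_translation_sum_zmon:
  fixes R :: "'v::euclidean_space set"
  assumes q: "0 < q" and tr: "is_translation h"
  shows "actQ q h (\<Sum>a\<in>R. zmon a)
    = Fract (\<Sum>a\<in>R. Poly_Mapping.single (emb a) (complex_of_real (q powr (- (h 0 \<bullet> a))))) 1"
proof -
  have gh: "aff_isometry h" using translation_aff_isometry[OF tr] .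
  have ha: "h a - h 0 = a" for a using tr unfolding is_translation_def by (metis add_diff_cancel_right')
  have "actQ q h (zmon a) = Fract (Poly_Mapping.single (emb a) (complex_of_real (q powr (- (h 0 \<bullet> a))))) 1"
    for a
    unfolding actQ_zmon[OF q gh] ha by (simp add: cQ_def zmon_def mult_single)
  then show ?thesis by (simp add: actQ_sum[OF q gh QL_zmon] sum_Fract_1)
qed

lemma inj_on_actQ_sum_zmon:
  fixes R :: "'v::euclidean_space set"
  assumes q: "0 < q" and q1: "q < 1" and finR: "finite R" and spanR: "span R = UNIV"
  shows "inj_on (\<lambda>h. actQ q h (\<Sum>a\<in>R. zmon a)) {h :: 'v \<Rightarrow> 'v. is_translation h}"
proof (rule inj_onI)
  fix h1 h2 :: "'v \<Rightarrow> 'v"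
  assume "h1 \<in> {h. is_translation h}" and "h2 \<in> {h. is_translation h}"
  then have t1: "is_translation h1" and t2: "is_translation h2" by simp_all
  assume eq: "actQ q h1 (\<Sum>a\<in>R. zmon a) = actQ q h2 (\<Sum>a\<in>R. zmon a)"
  have e: "(\<Sum>a\<in>R. Poly_Mapping.single (emb a) (complex_of_real (q powr (- (h1 0 \<bullet> a)))))
      = (\<Sum>a\<in>R. Poly_Mapping.single (emb a) (complex_of_real (q powr (- (h2 0 \<bullet> a)))))"
    using eq unfolding actQ_translation_sum_zmon[OF q t1] actQ_translation_sum_zmon[OF q t2]
    by (rule Fract_1_inj)
  have "(h1 0 - h2 0) \<bullet> a = 0" if a: "a \<in> R" for a
  proof -
    have lookup: "Poly_Mapping.lookup (\<Sum>a\<in>R. Poly_Mapping.single (emb a) (c a)) (emb a0) = c a0"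
      if "a0 \<in> R" for c :: "'v \<Rightarrow> complex" and a0
      using that finR by (simp add: lookup_sum lookup_single when_def sum.delta)
    have "q powr (- (h1 0 \<bullet> a)) = q powr (- (h2 0 \<bullet> a))"
      using arg_cong[OF e, of "\<lambda>x. Poly_Mapping.lookup x (emb a)"] lookup[OF a] by simp
    then have "h1 0 \<bullet> a = h2 0 \<bullet> a" using powr_inj[OF q] q1 by simp
    then show ?thesis by (simp add: inner_diff_left)
  qed
  then have "orthogonal (h1 0 - h2 0) x" if "x \<in> span R" for x
    using orthogonal_to_span[OF that] unfolding orthogonal_def by blast
  then have "(h1 0 - h2 0) \<bullet> (h1 0 - h2 0) = 0" using spanR unfolding orthogonal_def by blast
  then have "h1 0 = h2 0" by simp
  then show "h1 = h2" using is_translation_eq_iff[OF t1 t2] by blast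
qed

lemma translation_dop_faithful:
  fixes R :: "'v::euclidean_space set" and P :: "'v dop"
  assumes q: "0 < q" and q1: "q < 1" and rs: "root_system R"
    and fP: "finite (dsupp P)" and trP: "\<forall>h\<in>dsupp P. is_translation h"
    and vP: "\<forall>h. P h \<in> QL (UNIV::'v set)"
    and z: "\<And>f. W0_invariant q R f \<Longrightarrow> dapply q P f = 0"
  shows "P h = 0"
proof -
  define y where "y = (\<Sum>a\<in>R. zmon a)"
  have yK: "W0_invariant q R y" unfolding y_def by (rule W0_invariant_sum_zmon[OF q rs])
  then have yQ: "y \<in> QL (UNIV::'v set)" unfolding W0_invariant_def by blast
  have yK_power: "W0_invariant q R (y ^ m)" for m
    using yK unfolding W0_invariant_def by (auto simp: QL_power actQ_power[OF q] W0_aff_isometry)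
  have "(\<Sum>h\<in>dsupp P. P h * actQ q h y ^ m) = 0" for m
  proof -
    have "(\<Sum>h\<in>dsupp P. P h * actQ q h y ^ m) = dapply q P (y ^ m)"
      unfolding dapply_def using trP
      by (intro sum.cong) (simp_all add: actQ_power[OF q translation_aff_isometry yQ])
    also have "\<dots> = 0" by (rule z[OF yK_power])
    finally show ?thesis .
  qed
  moreover have "dsupp P \<subseteq> {h. is_translation h}" using trP by blast
  then have "inj_on (\<lambda>h. actQ q h y) (dsupp P)"
    unfolding y_def
    by (rule inj_on_subset[OF inj_on_actQ_sum_zmon[OF q q1 root_system_finite[OF rs] root_system_span[OF rs]]])
  ultimately have "\<forall>h\<in>dsupp P. P h = 0" by (intro vandermonde_coeffs_zero[OF fP])
  then show ?thesis by (auto simp: dsupp_iff)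
qed

lemma translation_dop_eqI:
  fixes R :: "'v::euclidean_space set" and X Y :: "'v dop"
  assumes q: "0 < q" and q1: "q < 1" and rs: "root_system R"
    and X: "wf_dop X" and Y: "wf_dop Y" and tX: "\<forall>h\<in>dsupp X. is_translation h" and tY: "\<forall>h\<in>dsupp Y. is_translation h"
    and e: "\<And>f. W0_invariant q R f \<Longrightarrow> dapply q X f = dapply q Y f"
  shows "X = Y"
proof
  fix h
  let ?P = "\<lambda>h. X h - Y h"
  have sub: "dsupp ?P \<subseteq> dsupp X \<union> dsupp Y" by (auto simp: dsupp_iff)
  have "?P h = 0"
  proof (rule translation_dop_faithful[where P="\<lambda>h. X h - Y h", OF q q1 rs])
    show "finite (dsupp ?P)" by (rule finite_subset[OF sub]) (simp add: wf_dopD(1)[OF X] wf_dopD(1)[OF Y])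
    show "\<forall>h\<in>dsupp ?P. is_translation h" using sub tX tY by blast
    show "\<forall>h. ?P h \<in> QL (UNIV::'v set)" by (intro allI QL_diff wf_dopD(3)[OF X] wf_dopD(3)[OF Y])
    fix f assume f: "W0_invariant q R f"
    show "dapply q ?P f = 0" unfolding dapply_diff[OF X Y] using e[OF f] by simp
  qed
  then show "X h = Y h" by simp
qed

context
  fixes q :: real and cs :: setting_case and R :: "'v::euclidean_space set"
    and eps al :: "nat \<Rightarrow> 'v" and k :: "'v \<times> real \<Rightarrow> complex"
  assumes q: "0 < q" and q1: "q < 1" and st: "setting cs R eps" and rb: "root_basis R al"
begin

lemma dapply_dbeta_commutant:
  assumes D: "D \<in> commutant q cs R eps al k" and f: "W0_invariant q R f"
  shows "dapply q (dbeta D) f = dapply q D f"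
  using dapply_dbeta_W0_invariant[OF q DRW_wf_dop DRW_linear_parts_in_W0 f] commutant_DRW[OF D]
  by simp

lemma W0_invariant_dapply_dbeta:
  assumes D: "D \<in> commutant q cs R eps al k" and f: "W0_invariant q R f"
  shows "W0_invariant q R (dapply q (dbeta D) f)"
  unfolding dapply_dbeta_commutant[OF D f]
  by (rule commutant_preserves_W0_invariant[OF q st rb D f])

lemma dbeta_dmult_commutant:
  assumes D: "D \<in> commutant q cs R eps al k" and E: "E \<in> commutant q cs R eps al k"
  shows "dbeta (dmult q D E) = dmult q (dbeta D) (dbeta E)"
proof (rule translation_dop_eqI[OF q q1 setting_root_system[OF st]])
  have Dw: "wf_dop D" and Ew: "wf_dop E" using DRW_wf_dop commutant_DRW D E by blast+
  have DEw: "wf_dop (dmult q D E)" by (rule wf_dop_dmult[OF q Dw Ew])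
  have bDw: "wf_dop (dbeta D)" and bEw: "wf_dop (dbeta E)" using wf_dop_dbeta Dw Ew by blast+
  show "wf_dop (dbeta (dmult q D E))" by (rule wf_dop_dbeta[OF DEw])
  show "wf_dop (dmult q (dbeta D) (dbeta E))" by (rule wf_dop_dmult[OF q bDw bEw])
  show "\<forall>h\<in>dsupp (dbeta (dmult q D E)). is_translation h"
    using dsupp_dbeta_is_translation by blast
  show "\<forall>h\<in>dsupp (dmult q (dbeta D) (dbeta E)). is_translation h"
    by (rule dsupp_dmult_translations) (use dsupp_dbeta_is_translation in blast)+
  fix f assume f: "W0_invariant q R f"
  have fQ: "f \<in> QL (UNIV::'v set)" using f unfolding W0_invariant_def by blast
  have Ef: "W0_invariant q R (dapply q E f)"
    by (rule commutant_preserves_W0_invariant[OF q st rb E f])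
  have DEl: "linear_parts_in_W0 R (dmult q D E)"
    using linear_parts_in_W0_dmult DRW_linear_parts_in_W0 commutant_DRW D E by blast
  have "dapply q (dbeta (dmult q D E)) f = dapply q (dmult q D E) f"
    by (rule dapply_dbeta_W0_invariant[OF q DEw DEl f, symmetric])
  also have "\<dots> = dapply q D (dapply q E f)" by (rule dapply_mult[OF q Dw Ew fQ])
  also have "\<dots> = dapply q (dbeta D) (dapply q (dbeta E) f)"
    by (simp add: dapply_dbeta_commutant[OF D Ef] dapply_dbeta_commutant[OF E f])
  also have "\<dots> = dapply q (dmult q (dbeta D) (dbeta E)) f"
    by (rule dapply_mult[OF q bDw bEw fQ, symmetric])
  finally show "dapply q (dbeta (dmult q D E)) f = dapply q (dmult q (dbeta D) (dbeta E)) f" .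
qed

lemma dbeta_conj_W0_commutant:
  assumes D: "D \<in> commutant q cs R eps al k" and w: "w \<in> weyl_group R"
  shows "dmult q (dmult q (dterm 1 w) (dbeta D)) (dterm 1 (inv w)) = dbeta D"
proof (rule translation_dop_eqI[OF q q1 setting_root_system[OF st]])
  have iw: "inv w \<in> weyl_group R" by (rule W0_inv[OF w])
  have bDw: "wf_dop (dbeta D)" by (rule wf_dop_dbeta[OF DRW_wf_dop[OF commutant_DRW[OF D]]])
  have w1: "wf_dop (dterm 1 w)" and w2: "wf_dop (dterm 1 (inv w))"
    using wf_dop_dterm W0_aff_isometry w iw QL_one by blast+
  have w12: "wf_dop (dmult q (dterm 1 w) (dbeta D))" by (rule wf_dop_dmult[OF q w1 bDw])
  show "wf_dop (dmult q (dmult q (dterm 1 w) (dbeta D)) (dterm 1 (inv w)))"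
    by (rule wf_dop_dmult[OF q w12 w2])
  show "wf_dop (dbeta D)" by (rule bDw)
  show "\<forall>h\<in>dsupp (dbeta D). is_translation h" using dsupp_dbeta_is_translation by blast
  then show "\<forall>h\<in>dsupp (dmult q (dmult q (dterm 1 w) (dbeta D)) (dterm 1 (inv w))). is_translation h"
    using dsupp_conj is_translation_conj_W0[OF w] by blast
  fix f assume f: "W0_invariant q R f"
  have fQ: "f \<in> QL (UNIV::'v set)" using f unfolding W0_invariant_def by blast
  have "dapply q (dmult q (dmult q (dterm 1 w) (dbeta D)) (dterm 1 (inv w))) f
      = dapply q (dmult q (dterm 1 w) (dbeta D)) (dapply q (dterm 1 (inv w)) f)"
    by (rule dapply_mult[OF q w12 w2 fQ])
  also have "dapply q (dterm 1 (inv w)) f = f"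
    using f iw unfolding W0_invariant_def by (simp add: dapply_dterm)
  also have "dapply q (dmult q (dterm 1 w) (dbeta D)) f = dapply q (dterm 1 w) (dapply q (dbeta D) f)"
    by (rule dapply_mult[OF q w1 bDw fQ])
  also have "\<dots> = dapply q (dbeta D) f"
    using W0_invariant_dapply_dbeta[OF D f] w unfolding W0_invariant_def by (simp add: dapply_dterm)
  finally show "dapply q (dmult q (dmult q (dterm 1 w) (dbeta D)) (dterm 1 (inv w))) f
      = dapply q (dbeta D) f" .
qed

lemma dbeta_commutant_DRL_inv: "D \<in> commutant q cs R eps al k \<Longrightarrow> dbeta D \<in> DRL_inv q cs R"
  unfolding DRL_inv_def
  using dbeta_DRL[OF setting_root_system[OF st] commutant_DRW] dbeta_conj_W0_commutant by blast

end

theorem lemma2p7: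
  fixes R :: "'v::euclidean_space set" and al eps :: "nat \<Rightarrow> 'v"
    and q :: real and k :: "'v \<times> real \<Rightarrow> complex" and cs :: setting_case
  assumes "0 < q" and "q < 1"
    and "setting cs R eps"
    and "root_basis R al"
    and "mult_label cs R eps k"
  shows "(\<forall>D\<in>commutant q cs R eps al k. dbeta D \<in> DRL_inv q cs R)
    \<and> (\<forall>D\<in>commutant q cs R eps al k. \<forall>E\<in>commutant q cs R eps al k.
          dbeta (dmult q D E) = dmult q (dbeta D) (dbeta E)
        \<and> dbeta (dadd D E) = dadd (dbeta D) (dbeta E))
    \<and> (\<forall>D\<in>commutant q cs R eps al k. \<forall>c. dbeta (dscal c D) = dscal c (dbeta D))
    \<and> dbeta dunit = dunit
    \<and> (\<forall>D\<in>commutant q cs R eps al k. \<forall>f\<in>QL (latL cs R).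
          (\<forall>w\<in>weyl_group R. actQ q w f = f) \<longrightarrow>
          (\<forall>w\<in>weyl_group R. actQ q w (dapply q (dbeta D) f) = dapply q (dbeta D) f))"
proof -
  note hyps = assms(1-4)
  have fin: "finite (dsupp D)" if "D \<in> commutant q cs R eps al k" for D
    using commutant_DRW[OF that] unfolding DRW_def by blast
  have invariant: "actQ q w (dapply q (dbeta D) f) = dapply q (dbeta D) f"
    if D: "D \<in> commutant q cs R eps al k" and f: "f \<in> QL (latL cs R)"
      and fixed: "\<forall>w\<in>weyl_group R. actQ q w f = f" and w: "w \<in> weyl_group R" for D f w
  proof -
    have "W0_invariant q R f" using f fixed QL_subset_UNIV unfolding W0_invariant_def by blast
    then show ?thesis using W0_invariant_dapply_dbeta[OF hyps D] w unfolding W0_invariant_def by blast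
  qed
  show ?thesis
    by (intro conjI ballI allI impI dbeta_commutant_DRL_inv[OF hyps] dbeta_dmult_commutant[OF hyps]
        dbeta_dadd dbeta_dscal fin dbeta_dunit invariant) blast+
qed

end
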